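(* Consider the storage arbitrage model and the optimal-sizing equation described in the context. Let $H_1,\dots,H_m$ be all the local maximal prices and $L_1,\dots,L_m$ all the local minimal prices of the ToU scheme. Then the equation $$\pi_s=\sum_{i=1}^n MR_i(C)$$ in the unknown capacity $C$ admits a unique solution if and only if $$\pi_s\le \pi_{\max}=\sum_{i=1}^m (H_i-L_i).$$
   Context: Time-of-Use (ToU) setting: a day is divided into periods $1,\dots,n$ with electricity price $\pi_i$ in period $i$, and $\pi_n=\min_i \pi_i$. A price $\pi_i$ is a local maximal (minimal) price if it is higher (lower) than the prices of the adjacent periods. The user has random demand $X_i$ in period $i$; the $X_i$ are independent, inelastic, and $X_i$ has a continuously differentiable density $f_i$ with $f_i(x)>0$ iff $x\ge 0$. The user invests in a lossless, perfectly efficient storage of capacity $C$, whose amortized marginal cost per unit capacity is $\pi_s$. With $r_i$ the energy stored at the end of period $i$, $r_0=r_n=C$, the user's purchase in period $i$ is $u_i=r_i+X_i-r_{i-1}\ge 0$ and the expected total cost is $J=\mathbb{E}\big[\sum_{i=1}^n\pi_i(r_i+X_i-r_{i-1})\big]$. Under a virtual-reservation policy $M_1,\dots,M_n$, at the end of period $i$ the user keeps at least $\min\{M_i,C\}$ in storage, i.e. $r_i=\max\{\min\{M_i,C\},r_{i-1}-X_i\}$; the last period fully charges the storage. $J_i(M_i)$ is the expected cost over periods $i+1,\dots,n$ when reserving $M_i$ at the end of period $i$ and the optimal reservations $M_{i+1}^*,\dots,M_n^*$ afterward. The optimal virtual reservations $M_i^*$ are computed backward: $M_i^*=0$ if $\pi_i\ge\pi_{i+1}$,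 and otherwise $M_i^*$ solves $\pi_i=-\frac{\mathrm{d}J_i}{\mathrm{d}M_i}$ (computed as if capacity were unconstrained). The marginal revenue of capacity in period $i$ is $MR_i(C)=0$ if $M_i^*\le C$, and $MR_i(C)=-\frac{\mathrm{d}J_i}{\mathrm{d}M_i}\big|_{M_i=C}-\pi_i$ otherwise. *)

theory Defs
  imports "HOL-Probability.Probability"
begin

text \<open>Periods are 1..n, treated cyclically (the day repeats): the period after n is 1,
  the period before 1 is n.\<close>

definition nxt :: "nat \<Rightarrow> nat \<Rightarrow> nat" where
  "nxt n k = (if k = n then 1 else k + 1)"

definition prv :: "nat \<Rightarrow> nat \<Rightarrow> nat" where
  "prv n k = (if k = 1 then n else k - 1)"

definition is_local_max :: "(nat \<Rightarrow> real) \<Rightarrow> nat \<Rightarrow> nat \<Rightarrow> bool" where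
  "is_local_max p n k \<longleftrightarrow> p k > p (prv n k) \<and> p k > p (nxt n k)"

definition is_local_min :: "(nat \<Rightarrow> real) \<Rightarrow> nat \<Rightarrow> nat \<Rightarrow> bool" where
  "is_local_min p n k \<longleftrightarrow> p k < p (prv n k) \<and> p k < p (nxt n k)"

definition pi_max :: "(nat \<Rightarrow> real) \<Rightarrow> nat \<Rightarrow> real" where
  "pi_max p n = (\<Sum>k | k \<in> {1..n} \<and> is_local_max p n k. p k)
              - (\<Sum>k | k \<in> {1..n} \<and> is_local_min p n k. p k)"

text \<open>Storage level at index i+j when the level at the end of period i is M and the
  (effective) reservations are a: r_k = max(a_k, r_(k-1) - X_k).\<close>
fun state :: "(nat \<Rightarrow> real) \<Rightarrow> (nat \<Rightarrow> 'a \<Rightarrow> real) \<Rightarrow> nat \<Rightarrow> real \<Rightarrow> nat \<Rightarrow> 'a \<Rightarrow> real" where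
  "state a X i M 0 \<omega> = M"
| "state a X i M (Suc j) \<omega> = max (a (i + Suc j)) (state a X i M j \<omega> - X (i + Suc j) \<omega>)"

text \<open>Level at the end of period k (k \<ge> i); the last period n fully charges to C.\<close>
definition level :: "(nat \<Rightarrow> real) \<Rightarrow> (nat \<Rightarrow> 'a \<Rightarrow> real) \<Rightarrow> nat \<Rightarrow> real \<Rightarrow> nat \<Rightarrow> real \<Rightarrow> nat \<Rightarrow> 'a \<Rightarrow> real" where
  "level a X n C i M k \<omega> = (if k = n then C else state a X i M (k - i) \<omega>)"

definition cost :: "(nat \<Rightarrow> real) \<Rightarrow> (nat \<Rightarrow> real) \<Rightarrow> (nat \<Rightarrow> 'a \<Rightarrow> real) \<Rightarrow> nat \<Rightarrow> real \<Rightarrow> nat \<Rightarrow> real \<Rightarrow> 'a \<Rightarrow> real" where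
  "cost p a X n C i M \<omega> =
     (\<Sum>k\<in>{i+1..n}. p k * (level a X n C i M k \<omega> + X k \<omega> - level a X n C i M (k - 1) \<omega>))"

text \<open>Effective reservation min(M_k, C) (virtual reservations may be +\<infinity>).\<close>
definition eff_res :: "real \<Rightarrow> (nat \<Rightarrow> ereal) \<Rightarrow> nat \<Rightarrow> real" where
  "eff_res C ms k = real_of_ereal (min (ms k) (ereal C))"

definition Jfrom :: "'a measure \<Rightarrow> (nat \<Rightarrow> 'a \<Rightarrow> real) \<Rightarrow> (nat \<Rightarrow> real) \<Rightarrow> nat \<Rightarrow> real
                     \<Rightarrow> (nat \<Rightarrow> ereal) \<Rightarrow> nat \<Rightarrow> real \<Rightarrow> real" where
  "Jfrom P X p n C ms i M = integral\<^sup>L P (cost p (eff_res C ms) X n C i M)"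

text \<open>For period n, the future periods are those of the next day, 1..n (start index 0).\<close>
definition start_idx :: "nat \<Rightarrow> nat \<Rightarrow> nat" where
  "start_idx n i = (if i = n then 0 else i)"

text \<open>Optimal virtual reservation of period i given later ones: 0 if p_i \<ge> p_(i+1),
  otherwise the (least) solution M \<ge> 0 of p_i = - dJ_i/dM (+\<infinity> if there is none).\<close>
definition mstar_step :: "'a measure \<Rightarrow> (nat \<Rightarrow> 'a \<Rightarrow> real) \<Rightarrow> (nat \<Rightarrow> real) \<Rightarrow> nat \<Rightarrow> real
                          \<Rightarrow> (nat \<Rightarrow> ereal) \<Rightarrow> nat \<Rightarrow> ereal" where
  "mstar_step P X p n C ms i =
     (if p i \<ge> p (nxt n i) then 0
      else Inf {ereal M | M. M \<ge> 0 \<and> p i = - deriv (Jfrom P X p n C ms (start_idx n i)) M})"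

fun mvec :: "'a measure \<Rightarrow> (nat \<Rightarrow> 'a \<Rightarrow> real) \<Rightarrow> (nat \<Rightarrow> real) \<Rightarrow> nat \<Rightarrow> real \<Rightarrow> nat \<Rightarrow> nat \<Rightarrow> ereal" where
  "mvec P X p n C 0 = (\<lambda>_. 0)"
| "mvec P X p n C (Suc d) =
     (let ms = mvec P X p n C d in ms(n - Suc d := mstar_step P X p n C ms (n - Suc d)))"

definition opt_res :: "'a measure \<Rightarrow> (nat \<Rightarrow> 'a \<Rightarrow> real) \<Rightarrow> (nat \<Rightarrow> real) \<Rightarrow> nat \<Rightarrow> real \<Rightarrow> nat \<Rightarrow> ereal" where
  "opt_res P X p n C = mvec P X p n C (n - 1)"

definition Mstar :: "'a measure \<Rightarrow> (nat \<Rightarrow> 'a \<Rightarrow> real) \<Rightarrow> (nat \<Rightarrow> real) \<Rightarrow> nat \<Rightarrow> real \<Rightarrow> nat \<Rightarrow> ereal" where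
  "Mstar P X p n C i =
     (if i = n then mstar_step P X p n C (opt_res P X p n C) n else opt_res P X p n C i)"

definition Jopt :: "'a measure \<Rightarrow> (nat \<Rightarrow> 'a \<Rightarrow> real) \<Rightarrow> (nat \<Rightarrow> real) \<Rightarrow> nat \<Rightarrow> real \<Rightarrow> nat \<Rightarrow> real \<Rightarrow> real" where
  "Jopt P X p n C i = Jfrom P X p n C (opt_res P X p n C) (start_idx n i)"

definition MR :: "'a measure \<Rightarrow> (nat \<Rightarrow> 'a \<Rightarrow> real) \<Rightarrow> (nat \<Rightarrow> real) \<Rightarrow> nat \<Rightarrow> real \<Rightarrow> nat \<Rightarrow> real" where
  "MR P X p n C i =
     (if Mstar P X p n C i \<le> ereal C then 0 else - deriv (Jopt P X p n C i) C - p i)"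

end

(*
  Let g_s(M) = -J_s'(M) be the marginal value of energy stored at the end of period s.
  Backward induction over the periods, differentiating under the integral in the Bellman
  recursion, shows that g_s is continuous, equals p_(s+1) for M <= 0, is nonincreasing up to
  the capacity C, and is the expectation of the marginal value of period s + 1 at the level
  M - X_(s+1), where that value is p_(s+1) below the reservation of period s + 1. Moreover
  g_s(M) does not depend on C as long as M <= C. Hence MR_i(C) = max 0 (g(C) - p_i), and
  the total marginal revenue S(C) is continuous with S(0) = sum of all price rises around
  the daily cycle = pi_max. S decreases strictly: if S(C1) = S(C2) with C1 < C2, then the
  positivity of the densities forces, period after period, every marginal value at C2 to
  exceed the current price, which fails at the last period, where it is the minimal price
  p_n. Finally a Markov bound on the demands gives S(C) --> 0. So pi_s = S(C) has exactly
  one solution C >= 0 if and only if pi_s <= pi_max.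
*)

theory Submission
  imports Defs
begin

section \<open>Real analysis and probability\<close>

lemma tendsto_integral_at:
  fixes s :: "real \<Rightarrow> real \<Rightarrow> real" and \<mu> :: "real measure"
  assumes meas: "\<And>t. s t \<in> borel_measurable \<mu>" and w: "integrable \<mu> w"
    and g: "g \<in> borel_measurable \<mu>"
    and lim: "AE x in \<mu>. ((\<lambda>t. s t x) \<longlongrightarrow> g x) (at t0)"
    and bound: "\<And>t. AE x in \<mu>. norm (s t x) \<le> w x"
  shows "((\<lambda>t. \<integral>x. s t x \<partial>\<mu>) \<longlongrightarrow> (\<integral>x. g x \<partial>\<mu>)) (at t0)"
proof (subst tendsto_at_iff_sequentially, intro allI impI)
  fix Y :: "nat \<Rightarrow> real" assume Y: "\<forall>i. Y i \<in> UNIV - {t0}" "Y \<longlonglongrightarrow> t0"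
  then have YF: "filterlim Y (at t0) sequentially"
    by (auto simp: filterlim_at)
  show "((\<lambda>t. \<integral>x. s t x \<partial>\<mu>) \<circ> Y) \<longlonglongrightarrow> (\<integral>x. g x \<partial>\<mu>)"
    unfolding comp_def
  proof (rule integral_dominated_convergence[where w=w])
    show "AE x in \<mu>. (\<lambda>i. s (Y i) x) \<longlonglongrightarrow> g x"
      using lim by eventually_elim (rule filterlim_compose[OF _ YF])
  qed (use meas w g bound in auto)
qed

lemma has_real_derivative_integral_lipschitz:
  fixes \<phi> :: "real \<Rightarrow> real \<Rightarrow> real" and \<mu> :: "real measure"
  assumes fin: "finite_measure \<mu>"
    and int: "\<And>M. integrable \<mu> (\<phi> M)"
    and lip: "\<And>M M' x. \<bar>\<phi> M x - \<phi> M' x\<bar> \<le> L * \<bar>M - M'\<bar>"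
    and der: "AE x in \<mu>. ((\<lambda>M. \<phi> M x) has_real_derivative \<psi> x) (at M0)"
    and psi: "\<psi> \<in> borel_measurable \<mu>"
  shows "((\<lambda>M. \<integral>x. \<phi> M x \<partial>\<mu>) has_real_derivative (\<integral>x. \<psi> x \<partial>\<mu>)) (at M0)"
proof -
  interpret finite_measure \<mu> by fact
  have "((\<lambda>t. \<integral>x. (\<phi> t x - \<phi> M0 x) / (t - M0) \<partial>\<mu>) \<longlongrightarrow> (\<integral>x. \<psi> x \<partial>\<mu>)) (at M0)"
  proof (rule tendsto_integral_at[where w="\<lambda>_. L"])
    show "(\<lambda>x. (\<phi> t x - \<phi> M0 x) / (t - M0)) \<in> borel_measurable \<mu>" for t
      using int[of t] int[of M0] by measurable
    show "AE x in \<mu>. ((\<lambda>t. (\<phi> t x - \<phi> M0 x) / (t - M0)) \<longlongrightarrow> \<psi> x) (at M0)"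
      using der by eventually_elim (simp add: has_field_derivative_iff)
    show "AE x in \<mu>. norm ((\<phi> t x - \<phi> M0 x) / (t - M0)) \<le> L" for t
    proof (rule AE_I2)
      fix x
      show "norm ((\<phi> t x - \<phi> M0 x) / (t - M0)) \<le> L"
      proof (cases "t = M0")
        case True
        have "0 \<le> L" using lip[where M=1 and M'=0 and x=x] by (simp add: order_trans[OF abs_ge_zero])
        then show ?thesis using True by simp
      next
        case False
        then have "\<bar>t - M0\<bar> > 0" by simp
        then show ?thesis using lip[where M=t and M'=M0 and x=x] by (simp add: abs_divide divide_le_eq)
      qed
    qed
  qed (use psi in auto)
  moreover have "(\<lambda>t. \<integral>x. (\<phi> t x - \<phi> M0 x) / (t - M0) \<partial>\<mu>)
      = (\<lambda>t. ((\<integral>x. \<phi> t x \<partial>\<mu>) - (\<integral>x. \<phi> M0 x \<partial>\<mu>)) / (t - M0))"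
    by (rule ext) (simp add: Bochner_Integration.integral_diff[OF int int])
  ultimately show ?thesis
    by (simp add: has_field_derivative_iff)
qed

lemma isCont_integral_translate:
  fixes h :: "real \<Rightarrow> real" and \<mu> :: "real measure"
  assumes fin: "finite_measure \<mu>" and sets: "sets \<mu> = sets borel"
    and hm: "h \<in> borel_measurable borel" and hb: "\<And>y. \<bar>h y\<bar> \<le> K"
    and hc: "\<And>y. y \<noteq> b \<Longrightarrow> isCont h y"
    and no_atoms: "\<And>c. AE x in \<mu>. x \<noteq> c"
  shows "isCont (\<lambda>M. \<integral>x. h (M - x) \<partial>\<mu>) M0"
proof -
  interpret finite_measure \<mu> by fact
  have [measurable_cong]: "sets \<mu> = sets borel" by fact
  note [measurable] = hm
  show ?thesis unfolding isCont_def
  proof (rule tendsto_integral_at[where w="\<lambda>_. K"])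
    show "AE x in \<mu>. ((\<lambda>t. h (t - x)) \<longlongrightarrow> h (M0 - x)) (at M0)"
      using no_atoms[of "M0 - b"]
    proof eventually_elim
      fix x assume "x \<noteq> M0 - b"
      then have "isCont h (M0 - x)" by (intro hc) auto
      then show "((\<lambda>t. h (t - x)) \<longlongrightarrow> h (M0 - x)) (at M0)"
        by (intro isCont_tendsto_compose[of _ h] tendsto_intros)
    qed
  qed (use hb in auto)
qed

lemma integral_translate_antitone:
  fixes h :: "real \<Rightarrow> real" and \<mu> :: "real measure"
  assumes \<mu>: "prob_space \<mu>" "sets \<mu> = sets borel" and pos: "AE x in \<mu>. 0 < x"
    and hm: "h \<in> borel_measurable borel" and hb: "\<And>y. lo \<le> h y \<and> h y \<le> hi"
    and mono: "\<And>y y'. y \<le> y' \<Longrightarrow> y' \<le> c \<Longrightarrow> h y' \<le> h y" and h0: "\<And>y. y \<le> 0 \<Longrightarrow> h y = q"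
  shows "\<And>M M'. M \<le> M' \<Longrightarrow> M' \<le> c \<Longrightarrow> (\<integral>x. h (M' - x) \<partial>\<mu>) \<le> (\<integral>x. h (M - x) \<partial>\<mu>)"
    and "\<And>M. M \<le> 0 \<Longrightarrow> (\<integral>x. h (M - x) \<partial>\<mu>) = q"
    and "\<And>M. lo \<le> (\<integral>x. h (M - x) \<partial>\<mu>) \<and> (\<integral>x. h (M - x) \<partial>\<mu>) \<le> hi"
proof -
  interpret prob_space \<mu> by fact
  have [measurable_cong]: "sets \<mu> = sets borel" by fact
  note [measurable] = hm
  have "\<bar>h y\<bar> \<le> \<bar>lo\<bar> + \<bar>hi\<bar>" for y
    using hb[of y] by (simp add: abs_le_iff) linarith
  then have int: "integrable \<mu> (\<lambda>x. h (M - x))" for M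
    by (intro integrable_const_bound[where B="\<bar>lo\<bar> + \<bar>hi\<bar>"]) auto
  show "(\<integral>x. h (M' - x) \<partial>\<mu>) \<le> (\<integral>x. h (M - x) \<partial>\<mu>)" if "M \<le> M'" "M' \<le> c" for M M'
  proof (rule integral_mono_AE[OF int int])
    show "AE x in \<mu>. h (M' - x) \<le> h (M - x)"
      using pos
    proof eventually_elim
      fix x :: real assume "0 < x"
      then show "h (M' - x) \<le> h (M - x)" using that by (intro mono) auto
    qed
  qed
  show "(\<integral>x. h (M - x) \<partial>\<mu>) = q" if "M \<le> 0" for M
  proof -
    have "AE x in \<mu>. h (M - x) = q"
      using pos by eventually_elim (use that h0 in auto)
    then have "(\<integral>x. h (M - x) \<partial>\<mu>) = (\<integral>x. q \<partial>\<mu>)" by (intro integral_cong_AE) auto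
    then show ?thesis using prob_space by simp
  qed
  show "lo \<le> (\<integral>x. h (M - x) \<partial>\<mu>) \<and> (\<integral>x. h (M - x) \<partial>\<mu>) \<le> hi" for M
  proof -
    have "(\<integral>x. lo \<partial>\<mu>) \<le> (\<integral>x. h (M - x) \<partial>\<mu>)" "(\<integral>x. h (M - x) \<partial>\<mu>) \<le> (\<integral>x. hi \<partial>\<mu>)"
      by (intro integral_mono int; use hb in simp)+
    then show ?thesis using prob_space by simp
  qed
qed

lemma antitone_leaves_level:
  fixes h :: "real \<Rightarrow> real"
  assumes mono: "\<And>y y'. y \<le> y' \<Longrightarrow> y' \<le> c \<Longrightarrow> h y' \<le> h y"
    and h0: "\<And>y. y \<le> 0 \<Longrightarrow> h y = q"
    and y0: "y0 < c" "h y0 \<noteq> q"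
  obtains t where "t \<le> y0" "\<And>y. y < t \<Longrightarrow> h y = q" "\<And>y. t < y \<Longrightarrow> y \<le> c \<Longrightarrow> h y < q"
proof -
  have hle: "h y \<le> q" if "y \<le> c" for y
  proof (cases "y \<le> 0")
    case True then show ?thesis using h0 by simp
  next
    case False then show ?thesis using mono[of 0 y] h0[of 0] that by simp
  qed
  have y0q: "h y0 < q" using hle[of y0] y0 by simp
  have y0pos: "0 < y0" using y0 h0[of y0] by force
  define T where "T = {y. y < c \<and> h y = q}"
  have T0: "0 \<in> T" using y0 y0pos h0[of 0] by (simp add: T_def)
  have Tb: "bdd_above T" unfolding T_def by (rule bdd_aboveI[of _ c]) auto
  have Tle: "y \<le> y0" if "y \<in> T" for y
  proof (rule ccontr)
    assume "\<not> y \<le> y0"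
    then have "h y \<le> h y0" using mono[of y0 y] that by (simp add: T_def)
    then show False using that y0q by (simp add: T_def)
  qed
  show ?thesis
  proof
    show "Sup T \<le> y0" using T0 Tle by (intro cSup_least) auto
    show "h y = q" if "y < Sup T" for y
    proof -
      obtain y' where "y' \<in> T" "y < y'" using \<open>y < Sup T\<close> T0 Tb less_cSup_iff[of T y] by auto
      then have "h y' = q" "y' < c" by (auto simp: T_def)
      then show ?thesis using mono[of y y'] hle[of y] \<open>y < y'\<close> by simp
    qed
    show "h y < q" if "Sup T < y" "y \<le> c" for y
    proof (cases "y < c")
      case True
      have "y \<notin> T" using that T0 Tb cSup_upper by force
      then show ?thesis using True hle[of y] that by (auto simp: T_def)
    next
      case False
      then show ?thesis using that mono[of y0 c] y0 y0q by simp
    qed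
  qed
qed

lemma AE_translate_eq_of_integral_eq:
  fixes h :: "real \<Rightarrow> real" and \<mu> :: "real measure"
  assumes fin: "finite_measure \<mu>" and sets: "sets \<mu> = sets borel"
    and hm: "h \<in> borel_measurable borel" and hb: "\<And>y. \<bar>h y\<bar> \<le> K"
    and pos: "AE x in \<mu>. 0 < x"
    and mono: "\<And>y y'. y \<le> y' \<Longrightarrow> y' \<le> c \<Longrightarrow> h y' \<le> h y"
    and ac: "a < c"
    and eq: "(\<integral>x. h (a - x) \<partial>\<mu>) = (\<integral>x. h (c - x) \<partial>\<mu>)"
  shows "AE x in \<mu>. h (a - x) = h (c - x)"
proof -
  interpret finite_measure \<mu> by fact
  have [measurable_cong]: "sets \<mu> = sets borel" by fact
  note [measurable] = hm
  have int_a: "integrable \<mu> (\<lambda>x. h (a - x))"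
    by (rule integrable_const_bound[where B=K]) (use hb in auto)
  have int_c: "integrable \<mu> (\<lambda>x. h (c - x))"
    by (rule integrable_const_bound[where B=K]) (use hb in auto)
  have nn: "AE x in \<mu>. 0 \<le> h (a - x) - h (c - x)"
    using pos by eventually_elim (use mono[of "a - x" "c - x" for x] ac in auto)
  have "(\<integral>x. h (a - x) - h (c - x) \<partial>\<mu>) = 0"
    using eq int_a int_c by (simp add: Bochner_Integration.integral_diff)
  then have "AE x in \<mu>. h (a - x) - h (c - x) = 0"
    using nn int_a int_c by (subst (asm) integral_nonneg_eq_0_iff_AE) auto
  then show ?thesis by eventually_elim simp
qed

lemma integral_translate_eq_imp_level:
  fixes h :: "real \<Rightarrow> real" and \<mu> :: "real measure"
  assumes fin: "finite_measure \<mu>" and sets: "sets \<mu> = sets borel"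
    and hm: "h \<in> borel_measurable borel" and hb: "\<And>y. \<bar>h y\<bar> \<le> K"
    and pos: "AE x in \<mu>. 0 < x"
    and supp: "\<And>l u. 0 \<le> l \<Longrightarrow> l < u \<Longrightarrow> emeasure \<mu> {l<..<u} \<noteq> 0"
    and mono: "\<And>y y'. y \<le> y' \<Longrightarrow> y' \<le> c \<Longrightarrow> h y' \<le> h y"
    and h0: "\<And>y. y \<le> 0 \<Longrightarrow> h y = q"
    and ac: "a < c"
    and eq: "(\<integral>x. h (a - x) \<partial>\<mu>) = (\<integral>x. h (c - x) \<partial>\<mu>)"
  shows "\<forall>y<c. h y = q"
proof (rule ccontr)
  assume "\<not> (\<forall>y<c. h y = q)"
  then obtain y0 where y0: "y0 < c" "h y0 \<noteq> q" by auto
  obtain t where t: "t \<le> y0" and below: "\<And>y. y < t \<Longrightarrow> h y = q"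
    and above: "\<And>y. t < y \<Longrightarrow> y \<le> c \<Longrightarrow> h y < q"
    using antitone_leaves_level[of c h q y0] mono h0 y0 by blast
  \<comment> \<open>On the demands in \<open>I\<close>, \<open>a - x\<close> lies below the threshold \<open>t\<close> and \<open>c - x\<close> above it.\<close>
  define I where "I = {max 0 (a - t) <..< c - t}"
  have "AE x in \<mu>. h (a - x) = h (c - x)"
    using fin sets hm hb pos mono ac eq by (rule AE_translate_eq_of_integral_eq)
  then have "AE x in \<mu>. x \<notin> I"
  proof eventually_elim
    fix x assume x: "h (a - x) = h (c - x)"
    show "x \<notin> I"
    proof
      assume "x \<in> I"
      then have "a - x < t" "t < c - x" "c - x \<le> c" by (auto simp: I_def)
      then show False using below above x by force
    qed
  qed
  then have "emeasure \<mu> I = 0"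
    using sets_eq_imp_space_eq[OF sets]
    by (subst (asm) AE_iff_measurable[of I]) (auto simp: I_def sets)
  moreover have "emeasure \<mu> I \<noteq> 0" unfolding I_def
    using ac t y0 by (intro supp) auto
  ultimately show False by simp
qed

lemma (in prob_space) integral_indep_var_fubini:
  fixes \<Phi> :: "'z \<Rightarrow> 'z \<Rightarrow> real" and T S :: "'z measure" and U V :: "'a \<Rightarrow> 'z"
  assumes ind: "indep_var S U T V"
    and meas: "(\<lambda>w. \<Phi> (fst w) (snd w)) \<in> borel_measurable (S \<Otimes>\<^sub>M T)"
    and int: "integrable M (\<lambda>\<omega>. \<Phi> (U \<omega>) (V \<omega>))"
  shows "(\<integral>\<omega>. \<Phi> (U \<omega>) (V \<omega>) \<partial>M) = (\<integral>x. (\<integral>\<omega>. \<Phi> x (V \<omega>) \<partial>M) \<partial>(distr M S U))"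
    and "integrable (distr M S U) (\<lambda>x. \<integral>\<omega>. \<Phi> x (V \<omega>) \<partial>M)"
proof -
  have rvU[measurable]: "U \<in> measurable M S" using ind by (rule indep_var_rv1)
  have rvV[measurable]: "V \<in> measurable M T" using ind by (rule indep_var_rv2)
  have eq: "distr M S U \<Otimes>\<^sub>M distr M T V = distr M (S \<Otimes>\<^sub>M T) (\<lambda>x. (U x, V x))"
    using ind by (simp add: indep_var_distribution_eq)
  interpret PU: prob_space "distr M S U" by (rule prob_space_distr) simp
  interpret PV: prob_space "distr M T V" by (rule prob_space_distr) simp
  interpret PUV: pair_prob_space "distr M S U" "distr M T V" ..
  note [measurable] = meas
  have intp: "integrable (distr M S U \<Otimes>\<^sub>M distr M T V) (\<lambda>w. \<Phi> (fst w) (snd w))"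
    unfolding eq by (subst integrable_distr_eq) (use int in auto)
  have inner: "(\<integral>z. \<Phi> x z \<partial>(distr M T V)) = (\<integral>\<omega>. \<Phi> x (V \<omega>) \<partial>M)"
    if "x \<in> space (distr M S U)" for x
  proof -
    have "(\<lambda>z. \<Phi> x z) \<in> borel_measurable T"
      using measurable_Pair2[OF meas, of x] that by simp
    then show ?thesis by (subst integral_distr) auto
  qed
  have "(\<integral>\<omega>. \<Phi> (U \<omega>) (V \<omega>) \<partial>M) = (\<integral>w. \<Phi> (fst w) (snd w) \<partial>(distr M (S \<Otimes>\<^sub>M T) (\<lambda>x. (U x, V x))))"
    by (subst integral_distr) auto
  also have "\<dots> = (\<integral>x. (\<integral>z. \<Phi> x z \<partial>(distr M T V)) \<partial>(distr M S U))"
    unfolding eq[symmetric] using PUV.integral_fst'[OF intp] by simp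
  also have "\<dots> = (\<integral>x. (\<integral>\<omega>. \<Phi> x (V \<omega>) \<partial>M) \<partial>(distr M S U))"
    by (intro Bochner_Integration.integral_cong refl inner)
  finally show "(\<integral>\<omega>. \<Phi> (U \<omega>) (V \<omega>) \<partial>M) = (\<integral>x. (\<integral>\<omega>. \<Phi> x (V \<omega>) \<partial>M) \<partial>(distr M S U))" .
  have "integrable (distr M S U) (\<lambda>x. \<integral>z. \<Phi> x z \<partial>(distr M T V))"
    using PUV.integrable_fst'[OF intp] by simp
  then show "integrable (distr M S U) (\<lambda>x. \<integral>\<omega>. \<Phi> x (V \<omega>) \<partial>M)"
    by (rule Bochner_Integration.integrable_cong[THEN iffD1, rotated 2]) (auto simp: inner)
qed

lemma (in prob_space) integral_indep_coordinate:
  fixes \<Phi> :: "real \<Rightarrow> (nat \<Rightarrow> real) \<Rightarrow> real" and X :: "nat \<Rightarrow> 'a \<Rightarrow> real"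
  assumes ind: "indep_vars (\<lambda>_. borel) X I" and k: "k \<in> I" and B: "B \<subseteq> I" "k \<notin> B"
    and meas: "(\<lambda>w. \<Phi> (fst w) (snd w)) \<in> borel_measurable (borel \<Otimes>\<^sub>M PiM B (\<lambda>_. borel))"
    and int: "integrable M (\<lambda>\<omega>. \<Phi> (X k \<omega>) (restrict (\<lambda>j. X j \<omega>) B))"
  shows "(\<integral>\<omega>. \<Phi> (X k \<omega>) (restrict (\<lambda>j. X j \<omega>) B) \<partial>M)
           = (\<integral>x. (\<integral>\<omega>. \<Phi> x (restrict (\<lambda>j. X j \<omega>) B) \<partial>M) \<partial>distr M borel (X k))"
    and "integrable (distr M borel (X k)) (\<lambda>x. \<integral>\<omega>. \<Phi> x (restrict (\<lambda>j. X j \<omega>) B) \<partial>M)"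
proof -
  define U where "U \<omega> = restrict (\<lambda>j. X j \<omega>) {k}" for \<omega>
  define V where "V \<omega> = restrict (\<lambda>j. X j \<omega>) B" for \<omega>
  define G where "G x = (\<integral>\<omega>. \<Phi> x (V \<omega>) \<partial>M)" for x
  have ind': "indep_var (PiM {k} (\<lambda>_. borel)) U (PiM B (\<lambda>_. borel)) V"
    unfolding U_def V_def using k B by (intro indep_var_restrict[OF ind]) auto
  have Um: "U \<in> measurable M (PiM {k} (\<lambda>_. borel))" by (rule indep_var_rv1[OF ind'])
  have [measurable]: "V \<in> measurable M (PiM B (\<lambda>_. borel))" by (rule indep_var_rv2[OF ind'])
  have coord: "(\<lambda>u. u k) \<in> borel_measurable (PiM {k} (\<lambda>_. borel))"
    by (rule measurable_component_singleton) simp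
  have "(\<lambda>w. (fst w k, snd w))
      \<in> measurable (PiM {k} (\<lambda>_. borel) \<Otimes>\<^sub>M PiM B (\<lambda>_. borel)) (borel \<Otimes>\<^sub>M PiM B (\<lambda>_. borel))"
    using coord by measurable
  from measurable_compose[OF this meas]
  have meas': "(\<lambda>w. \<Phi> (fst w k) (snd w)) \<in> borel_measurable (PiM {k} (\<lambda>_. borel) \<Otimes>\<^sub>M PiM B (\<lambda>_. borel))"
    by simp
  have "(\<lambda>w. (fst w, V (snd w))) \<in> measurable (borel \<Otimes>\<^sub>M M) (borel \<Otimes>\<^sub>M PiM B (\<lambda>_. borel))"
    by measurable
  from measurable_compose[OF this meas]
  have "(\<lambda>(x, \<omega>). \<Phi> x (V \<omega>)) \<in> borel_measurable (borel \<Otimes>\<^sub>M M)"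
    by (simp add: case_prod_beta')
  then have Gm: "G \<in> borel_measurable borel"
    unfolding G_def by (rule borel_measurable_lebesgue_integral)
  have distr_U: "distr M borel (X k) = distr (distr M (PiM {k} (\<lambda>_. borel)) U) borel (\<lambda>u. u k)"
    using Um coord by (subst distr_distr) (auto simp: U_def comp_def intro!: distr_cong)
  have int': "integrable M (\<lambda>\<omega>. \<Phi> (U \<omega> k) (V \<omega>))" using int by (simp add: U_def V_def)
  note fubini = integral_indep_var_fubini[where \<Phi>="\<lambda>u z. \<Phi> (u k) z", OF ind' meas' int']
  have UV: "(\<lambda>\<omega>. \<Phi> (U \<omega> k) (V \<omega>)) = (\<lambda>\<omega>. \<Phi> (X k \<omega>) (restrict (\<lambda>j. X j \<omega>) B))"
    by (simp add: U_def V_def)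
  from fubini(1) have "(\<integral>\<omega>. \<Phi> (X k \<omega>) (restrict (\<lambda>j. X j \<omega>) B) \<partial>M)
      = (\<integral>u. G (u k) \<partial>distr M (PiM {k} (\<lambda>_. borel)) U)"
    by (simp only: UV G_def)
  also have "\<dots> = (\<integral>x. G x \<partial>distr M borel (X k))"
    unfolding distr_U using coord Gm by (intro integral_distr[symmetric]) auto
  finally show "(\<integral>\<omega>. \<Phi> (X k \<omega>) (restrict (\<lambda>j. X j \<omega>) B) \<partial>M) = (\<integral>x. G x \<partial>distr M borel (X k))" .
  have "integrable (distr M borel (X k)) G \<longleftrightarrow> integrable (distr M (PiM {k} (\<lambda>_. borel)) U) (\<lambda>u. G (u k))"
    unfolding distr_U using coord Gm by (intro integrable_distr_eq) auto
  then show "integrable (distr M borel (X k)) G"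
    using fubini(2) unfolding G_def by simp
qed

lemma Inf_nonneg_solutions:
  fixes g :: "real \<Rightarrow> real" and q :: real
  assumes "continuous_on UNIV g"
  defines "S \<equiv> {M. 0 \<le> M \<and> q = g M}"
  shows "S = {} \<Longrightarrow> Inf {ereal M | M. 0 \<le> M \<and> q = g M} = \<infinity>"
    and "S \<noteq> {} \<Longrightarrow> \<exists>m\<in>S. Inf {ereal M | M. 0 \<le> M \<and> q = g M} = ereal m \<and> (\<forall>x\<in>S. m \<le> x)"
proof -
  have eq: "{ereal M | M. 0 \<le> M \<and> q = g M} = ereal ` S" unfolding S_def by auto
  show "S = {} \<Longrightarrow> Inf {ereal M | M. 0 \<le> M \<and> q = g M} = \<infinity>"
    unfolding eq by (simp add: top_ereal_def)
  assume ne: "S \<noteq> {}"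
  have cl: "closed S" unfolding S_def
    using assms(1) by (intro closed_Collect_conj closed_Collect_le closed_Collect_eq continuous_intros)
      (auto simp: continuous_on_eq_continuous_at)
  have bb: "bdd_below S" unfolding S_def by (rule bdd_belowI[of _ 0]) auto
  have m: "Inf S \<in> S" by (rule closed_contains_Inf[OF ne bb cl])
  have "Inf (ereal ` S) = ereal (Inf S)"
    using ereal_Inf'[OF bb ne] by simp
  then show "\<exists>m\<in>S. Inf {ereal M | M. 0 \<le> M \<and> q = g M} = ereal m \<and> (\<forall>x\<in>S. m \<le> x)"
    unfolding eq using m bb by (intro bexI[of _ "Inf S"]) (auto intro: cInf_lower)
qed

lemma min_Inf_nonneg_solutions_cong:
  fixes m :: real
  assumes "\<forall>x. 0 \<le> x \<longrightarrow> x \<le> m \<longrightarrow> (P x \<longleftrightarrow> Q x)"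
  shows "min (Inf {ereal M |M. 0 \<le> M \<and> P M}) (ereal m) = min (Inf {ereal M |M. 0 \<le> M \<and> Q M}) (ereal m)"
proof -
  have *: "min (Inf {ereal M |M. 0 \<le> M \<and> P M}) (ereal m) \<le> min (Inf {ereal M |M. 0 \<le> M \<and> Q M}) (ereal m)"
    if H: "\<forall>x. 0 \<le> x \<longrightarrow> x \<le> m \<longrightarrow> (P x \<longleftrightarrow> Q x)" for P Q
  proof -
    have "min (Inf {ereal M |M. 0 \<le> M \<and> P M}) (ereal m) \<le> Inf {ereal M |M. 0 \<le> M \<and> Q M}"
    proof (rule Inf_greatest)
      fix z assume "z \<in> {ereal M |M. 0 \<le> M \<and> Q M}"
      then obtain x where x: "z = ereal x" "0 \<le> x" "Q x" by auto
      show "min (Inf {ereal M |M. 0 \<le> M \<and> P M}) (ereal m) \<le> z"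
      proof (cases "x \<le> m")
        case True
        then have "Inf {ereal M |M. 0 \<le> M \<and> P M} \<le> ereal x" using H x by (intro Inf_lower) auto
        then show ?thesis using x by (simp add: min.coboundedI1)
      next
        case False
        then show ?thesis using x by (simp add: min.coboundedI2)
      qed
    qed
    then show ?thesis by simp
  qed
  show ?thesis
    using *[of P Q] *[of Q P] assms by (auto intro: antisym)
qed

lemma Inf_nonneg_solutions_le_iff:
  fixes g :: "real \<Rightarrow> real"
  assumes cont: "continuous_on UNIV g" and mono: "\<And>M M'. M \<le> M' \<Longrightarrow> M' \<le> C \<Longrightarrow> g M' \<le> g M"
    and C: "0 \<le> C" and g0: "q < g 0"
  shows "Inf {ereal M |M. 0 \<le> M \<and> q = g M} \<le> ereal C \<longleftrightarrow> g C \<le> q"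
proof
  assume le: "Inf {ereal M |M. 0 \<le> M \<and> q = g M} \<le> ereal C"
  have "{M. 0 \<le> M \<and> q = g M} \<noteq> {}"
  proof
    assume "{M. 0 \<le> M \<and> q = g M} = {}"
    then have "Inf {ereal M |M. 0 \<le> M \<and> q = g M} = \<infinity>" by (rule Inf_nonneg_solutions(1)[OF cont])
    then show False using le by simp
  qed
  then obtain m where "0 \<le> m" "q = g m" "Inf {ereal M |M. 0 \<le> M \<and> q = g M} = ereal m"
    using Inf_nonneg_solutions(2)[OF cont, of q] by auto
  then show "g C \<le> q" using le mono[of m C] by simp
next
  assume "g C \<le> q"
  then obtain y where "0 \<le> y" "y \<le> C" "g y = q"
    using IVT2'[of g C q 0] C g0 continuous_on_subset[OF cont] by auto
  then have "Inf {ereal M |M. 0 \<le> M \<and> q = g M} \<le> ereal y" by (intro Inf_lower) auto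
  then show "Inf {ereal M |M. 0 \<le> M \<and> q = g M} \<le> ereal C" using \<open>y \<le> C\<close> by (simp add: order_trans)
qed

lemma integral_translate_le_Markov:
  fixes h :: "real \<Rightarrow> real" and \<mu> :: "real measure"
  assumes \<mu>: "prob_space \<mu>" "sets \<mu> = sets borel" and int: "integrable \<mu> (\<lambda>x. x)"
    and pos: "AE x in \<mu>. 0 < x"
    and hm: "h \<in> borel_measurable borel" and hb: "\<And>y. \<bar>h y\<bar> \<le> B"
    and h_le: "\<And>y. h y \<le> b + K" and h_tail: "\<And>y. C0 < y \<Longrightarrow> y \<le> C \<Longrightarrow> h y \<le> b"
    and K: "0 \<le> K" and C: "C0 < C"
  shows "(\<integral>x. h (C - x) \<partial>\<mu>) \<le> b + K * (\<integral>x. \<bar>x\<bar> \<partial>\<mu>) / (C - C0)"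
proof -
  interpret prob_space \<mu> by fact
  have [measurable_cong]: "sets \<mu> = sets borel" by fact
  note [measurable] = hm
  have sp: "space \<mu> = UNIV" using sets_eq_imp_space_eq[OF \<mu>(2)] by simp
  define t where "t = C - C0"
  have t: "0 < t" using C by (simp add: t_def)
  have fI: "emeasure \<mu> {x. t \<le> x} < \<infinity>" by (simp add: emeasure_eq_measure)
  have intI: "integrable \<mu> (\<lambda>x. K * indicator {x. t \<le> x} x)"
    using fI by (intro integrable_mult_right integrable_real_indicator) auto
  have "(\<integral>x. h (C - x) \<partial>\<mu>) \<le> (\<integral>x. b + K * indicator {x. t \<le> x} x \<partial>\<mu>)"
  proof (rule integral_mono_AE)
    show "integrable \<mu> (\<lambda>x. h (C - x))"
      by (rule integrable_const_bound[where B=B]) (use hb in auto)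
    show "integrable \<mu> (\<lambda>x. b + K * indicator {x. t \<le> x} x)"
      by (intro Bochner_Integration.integrable_add integrable_const intI)
    show "AE x in \<mu>. h (C - x) \<le> b + K * indicator {x. t \<le> x} x"
      using pos
    proof eventually_elim
      fix x :: real assume "0 < x"
      then show "h (C - x) \<le> b + K * indicator {x. t \<le> x} x"
        using h_le[of "C - x"] h_tail[of "C - x"] by (cases "t \<le> x") (auto simp: t_def)
    qed
  qed
  also have "\<dots> = b + K * measure \<mu> {x. t \<le> x}"
    using fI prob_space by (subst Bochner_Integration.integral_add[OF integrable_const intI]) auto
  also have "\<dots> \<le> b + K * ((\<integral>x. \<bar>x\<bar> \<partial>\<mu>) / t)"
  proof -
    have "measure \<mu> {x. t \<le> x} \<le> measure \<mu> {x \<in> space \<mu>. t \<le> \<bar>x\<bar>}"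
      by (intro finite_measure_mono) (auto simp: sp)
    also have "\<dots> \<le> (\<integral>x. \<bar>x\<bar> \<partial>\<mu>) / t"
      using int t by (intro integral_Markov_inequality_measure integrable_abs) auto
    finally have "measure \<mu> {x. t \<le> x} \<le> (\<integral>x. \<bar>x\<bar> \<partial>\<mu>) / t" .
    from mult_left_mono[OF this K] show ?thesis by simp
  qed
  finally show ?thesis by (simp add: t_def)
qed

lemma ex1_nonneg_solution_iff:
  fixes S :: "real \<Rightarrow> real"
  assumes cont: "\<And>B. 0 \<le> B \<Longrightarrow> continuous_on {0..B} S"
    and strict: "\<And>C C'. 0 \<le> C \<Longrightarrow> C < C' \<Longrightarrow> S C' < S C"
    and small: "\<exists>B\<ge>0. S B \<le> y"
  shows "(\<exists>!C. 0 \<le> C \<and> y = S C) \<longleftrightarrow> y \<le> S 0"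
proof
  assume "\<exists>!C. 0 \<le> C \<and> y = S C"
  then obtain C where C: "0 \<le> C" "y = S C" by auto
  show "y \<le> S 0"
  proof (cases "C = 0")
    case False
    then have "S C < S 0" using strict[of 0 C] C(1) by linarith
    then show ?thesis using C(2) by linarith
  qed (use C in simp)
next
  assume le: "y \<le> S 0"
  obtain B where B: "0 \<le> B" "S B \<le> y" using small by blast
  obtain C where C: "0 \<le> C" "S C = y"
    using IVT2'[of S B y 0] B le cont[OF B(1)] by auto
  have uniq: "C' = C" if "0 \<le> C'" "S C' = y" for C'
  proof (rule ccontr)
    assume "C' \<noteq> C"
    then have "S C < S C' \<or> S C' < S C"
      using strict[of C C'] strict[of C' C] C(1) that(1) by linarith
    then show False using C(2) that(2) by linarith
  qed
  show "\<exists>!C. 0 \<le> C \<and> y = S C"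
  proof (rule ex1I[of _ C])
    fix C' assume "0 \<le> C' \<and> y = S C'"
    then show "C' = C" by (intro uniq) auto
  qed (use C in simp)
qed

section \<open>Prices around the daily cycle\<close>

lemma nxt_in: "2 \<le> n \<Longrightarrow> i \<in> {1..n} \<Longrightarrow> nxt n i \<in> {1..n}" by (auto simp: nxt_def)
lemma prv_in: "2 \<le> n \<Longrightarrow> i \<in> {1..n} \<Longrightarrow> prv n i \<in> {1..n}" by (auto simp: prv_def)
lemma prv_nxt: "2 \<le> n \<Longrightarrow> i \<in> {1..n} \<Longrightarrow> prv n (nxt n i) = i" by (auto simp: nxt_def prv_def)
lemma nxt_prv: "2 \<le> n \<Longrightarrow> i \<in> {1..n} \<Longrightarrow> nxt n (prv n i) = i" by (auto simp: nxt_def prv_def)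

lemma sum_rises_eq_pi_max:
  fixes p :: "nat \<Rightarrow> real"
  assumes n2: "n \<ge> 2" and adj: "\<forall>k\<in>{1..n}. p k \<noteq> p (nxt n k)"
  shows "(\<Sum>i=1..n. max 0 (p (nxt n i) - p i)) = pi_max p n"
proof -
  have bij: "bij_betw (nxt n) {1..n} {1..n}"
    by (rule bij_betw_byWitness[where f'="prv n"]) (use n2 prv_nxt nxt_prv nxt_in prv_in in auto)
  \<comment> \<open>Each rise \<open>p i < p (nxt n i)\<close> is split into the price it reaches and the price it starts from;
    reindexing the former by \<open>nxt n\<close> makes every term a difference at a single period \<open>j\<close>.\<close>
  have "(\<Sum>i=1..n. max 0 (p (nxt n i) - p i)) =
      (\<Sum>i=1..n. (if p i < p (nxt n i) then p (nxt n i) else 0))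
      - (\<Sum>i=1..n. (if p i < p (nxt n i) then p i else 0))"
    by (simp add: sum_subtractf[symmetric]) (intro sum.cong refl, auto simp: max_def)
  also have "(\<Sum>i=1..n. (if p i < p (nxt n i) then p (nxt n i) else 0))
      = (\<Sum>i=1..n. (\<lambda>j. if p (prv n j) < p j then p j else 0) (nxt n i))"
    by (intro sum.cong refl) (use n2 prv_nxt in auto)
  also have "\<dots> = (\<Sum>j=1..n. if p (prv n j) < p j then p j else 0)"
    by (rule sum.reindex_bij_betw[OF bij])
  finally have "(\<Sum>i=1..n. max 0 (p (nxt n i) - p i)) =
      (\<Sum>j=1..n. (if p (prv n j) < p j then p j else 0) - (if p j < p (nxt n j) then p j else 0))"
    by (simp add: sum_subtractf)
  also have "\<dots> = (\<Sum>j=1..n. (if is_local_max p n j then p j else 0)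
                           - (if is_local_min p n j then p j else 0))"
  proof (intro sum.cong refl)
    fix j assume j: "j \<in> {1..n}"
    have "p j \<noteq> p (nxt n j)" using adj j by auto
    moreover have "p (prv n j) \<noteq> p j" using adj prv_in[OF n2 j] nxt_prv[OF n2 j] by force
    ultimately show "(if p (prv n j) < p j then p j else 0) - (if p j < p (nxt n j) then p j else 0) =
        (if is_local_max p n j then p j else 0) - (if is_local_min p n j then p j else 0)"
      unfolding is_local_max_def is_local_min_def by auto
  qed
  also have "\<dots> = pi_max p n"
    unfolding pi_max_def by (simp add: sum_subtractf sum.inter_filter[symmetric] conj_commute)
  finally show ?thesis .
qed

section \<open>Storage dynamics along a demand path\<close>

lemma state_Suc_start:
  "state a X s M (Suc j) \<omega> = state a X (Suc s) (max (a (Suc s)) (M - X (Suc s) \<omega>)) j \<omega>"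
  by (induction j) (auto simp: add.commute)

lemma level_Suc_start:
  assumes "s < k"
  shows "level a X n C s M k \<omega> = level a X n C (Suc s) (max (a (Suc s)) (M - X (Suc s) \<omega>)) k \<omega>"
proof -
  have "k - s = Suc (k - Suc s)" using assms by simp
  then show ?thesis unfolding level_def by (simp only: state_Suc_start)
qed

text \<open>\<open>refill_cost q a J x M\<close> is the cost from period \<open>s + 1\<close> on, starting from level \<open>M\<close>,
  when period \<open>s + 1\<close> has demand \<open>x\<close>, price \<open>q\<close> and reservation \<open>a\<close>, and \<open>J\<close> gives the cost
  of the later periods in terms of the level at the end of period \<open>s + 1\<close>.\<close>

definition refill_cost :: "real \<Rightarrow> real \<Rightarrow> (real \<Rightarrow> real) \<Rightarrow> real \<Rightarrow> real \<Rightarrow> real" where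
  "refill_cost q a J x M = q * (max a (M - x) + x - M) + J (max a (M - x))"

lemma cost_unfold_first:
  fixes a :: "nat \<Rightarrow> real" and X :: "nat \<Rightarrow> 'a \<Rightarrow> real" and M :: real and \<omega> :: 'a
  assumes "Suc s < n"
  shows "cost p a X n C s M \<omega>
    = refill_cost (p (Suc s)) (a (Suc s)) (\<lambda>r. cost p a X n C (Suc s) r \<omega>) (X (Suc s) \<omega>) M"
proof -
  define r where "r = max (a (Suc s)) (M - X (Suc s) \<omega>)"
  have split: "{s+1..n} = insert (Suc s) {Suc s + 1..n}" using assms by auto
  have "cost p a X n C s M \<omega>
      = p (Suc s) * (level a X n C s M (Suc s) \<omega> + X (Suc s) \<omega> - level a X n C s M s \<omega>)
        + (\<Sum>k\<in>{Suc s + 1..n}. p k * (level a X n C s M k \<omega> + X k \<omega> - level a X n C s M (k - 1) \<omega>))"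
    unfolding cost_def split by (subst sum.insert) auto
  also have "level a X n C s M (Suc s) \<omega> = r" using assms by (simp add: level_def r_def)
  also have "level a X n C s M s \<omega> = M" using assms by (simp add: level_def)
  also have "(\<Sum>k\<in>{Suc s + 1..n}. p k * (level a X n C s M k \<omega> + X k \<omega> - level a X n C s M (k - 1) \<omega>))
      = cost p a X n C (Suc s) r \<omega>"
    unfolding cost_def r_def
  proof (intro sum.cong refl)
    fix k assume "k \<in> {Suc s + 1..n}"
    then have "s < k" "s < k - 1" by auto
    then show "p k * (level a X n C s M k \<omega> + X k \<omega> - level a X n C s M (k - 1) \<omega>) =
      p k * (level a X n C (Suc s) (max (a (Suc s)) (M - X (Suc s) \<omega>)) k \<omega> + X k \<omega>
        - level a X n C (Suc s) (max (a (Suc s)) (M - X (Suc s) \<omega>)) (k - 1) \<omega>)"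
      by (simp only: level_Suc_start)
  qed
  finally show ?thesis unfolding refill_cost_def r_def .
qed

lemma cost_last_period:
  assumes "n \<ge> 1"
  shows "cost p a X n C (n - 1) M \<omega> = p n * (C + X n \<omega> - M)"
proof -
  have e: "{n - 1 + 1..n} = {n}" using assms by auto
  show ?thesis unfolding cost_def e level_def using assms by auto
qed

lemma state_lipschitz: "\<bar>state a X i M j \<omega> - state a X i M' j \<omega>\<bar> \<le> \<bar>M - M'\<bar>"
proof (induction j)
  case (Suc j)
  then show ?case by (simp add: max_def) linarith
qed simp

lemma state_abs_le:
  "\<bar>state a X i M j \<omega>\<bar> \<le> \<bar>M\<bar> + (\<Sum>k\<in>{i+1..i+j}. \<bar>a k\<bar> + \<bar>X k \<omega>\<bar>)"
proof (induction j)
  case (Suc j)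
  have e: "{i+1..i+Suc j} = insert (i + Suc j) {i+1..i+j}" by auto
  show ?case unfolding e using Suc by (simp add: max_def) linarith
qed simp

lemma abs_add_diff_le: "\<bar>u\<bar> \<le> B \<Longrightarrow> \<bar>v\<bar> \<le> B \<Longrightarrow> \<bar>u + x - v\<bar> \<le> 2 * B + \<bar>x\<bar>" for u v x B :: real
  by (auto simp: abs_le_iff abs_if split: if_splits)

lemma level_abs_le:
  assumes "i \<le> k" "k \<le> n"
  shows "\<bar>level a X n C i M k \<omega>\<bar> \<le> \<bar>C\<bar> + \<bar>M\<bar> + (\<Sum>k'\<in>{i+1..n}. \<bar>a k'\<bar> + \<bar>X k' \<omega>\<bar>)"
proof -
  have "0 \<le> (\<Sum>k'\<in>{i+1..n}. \<bar>a k'\<bar> + \<bar>X k' \<omega>\<bar>)" by (intro sum_nonneg) auto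
  moreover have "(\<Sum>k'\<in>{i+1..i+(k-i)}. \<bar>a k'\<bar> + \<bar>X k' \<omega>\<bar>) \<le> (\<Sum>k'\<in>{i+1..n}. \<bar>a k'\<bar> + \<bar>X k' \<omega>\<bar>)"
    using assms by (intro sum_mono2) auto
  ultimately show ?thesis unfolding level_def using state_abs_le[of a X i M "k - i" \<omega>] by auto
qed

lemma cost_lipschitz:
  "\<bar>cost p a X n C i M \<omega> - cost p a X n C i M' \<omega>\<bar> \<le> (\<Sum>k\<in>{1..n}. 2 * \<bar>p k\<bar>) * \<bar>M - M'\<bar>"
proof -
  let ?d = "\<lambda>k. level a X n C i M k \<omega> - level a X n C i M' k \<omega>"
  have lv: "\<bar>?d k\<bar> \<le> \<bar>M - M'\<bar>" for k
    unfolding level_def using state_lipschitz by auto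
  have "\<bar>cost p a X n C i M \<omega> - cost p a X n C i M' \<omega>\<bar> = \<bar>\<Sum>k\<in>{i+1..n}. p k * (?d k - ?d (k - 1))\<bar>"
    unfolding cost_def by (simp add: sum_subtractf[symmetric] algebra_simps)
  also have "\<dots> \<le> (\<Sum>k\<in>{i+1..n}. \<bar>p k * (?d k - ?d (k - 1))\<bar>)"
    by (rule sum_abs)
  also have "\<dots> \<le> (\<Sum>k\<in>{i+1..n}. 2 * \<bar>p k\<bar> * \<bar>M - M'\<bar>)"
  proof (intro sum_mono)
    fix k
    have "\<bar>?d k - ?d (k - 1)\<bar> \<le> 2 * \<bar>M - M'\<bar>"
      using lv[of k] lv[of "k - 1"] abs_triangle_ineq4[of "?d k" "?d (k - 1)"] by linarith
    then show "\<bar>p k * (?d k - ?d (k - 1))\<bar> \<le> 2 * \<bar>p k\<bar> * \<bar>M - M'\<bar>"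
      unfolding abs_mult by (metis abs_ge_zero mult.assoc mult.left_commute mult_left_mono)
  qed
  also have "\<dots> \<le> (\<Sum>k\<in>{1..n}. 2 * \<bar>p k\<bar> * \<bar>M - M'\<bar>)"
    by (intro sum_mono2) auto
  also have "\<dots> = (\<Sum>k\<in>{1..n}. 2 * \<bar>p k\<bar>) * \<bar>M - M'\<bar>" by (simp add: sum_distrib_right)
  finally show ?thesis .
qed

lemma state_cong_res:
  "i + j < n \<Longrightarrow> (\<forall>k. i < k \<longrightarrow> k < n \<longrightarrow> a k = a' k) \<Longrightarrow> state a X i M j \<omega> = state a' X i M j \<omega>"
  by (induction j) auto

lemma cost_cong_res:
  assumes "\<forall>k. s < k \<longrightarrow> k < n \<longrightarrow> a k = a' k"
  shows "cost p a X n C s M \<omega> = cost p a' X n C s M \<omega>"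
  unfolding cost_def level_def
proof (intro sum.cong refl)
  fix k assume k: "k \<in> {s+1..n}"
  have "k \<noteq> n \<Longrightarrow> state a X s M (k - s) \<omega> = state a' X s M (k - s) \<omega>"
    using k assms by (intro state_cong_res) auto
  moreover have "k - 1 \<noteq> n \<Longrightarrow> state a X s M (k - 1 - s) \<omega> = state a' X s M (k - 1 - s) \<omega>"
    using k assms by (intro state_cong_res) auto
  ultimately show "p k * ((if k = n then C else state a X s M (k - s) \<omega>) + X k \<omega> -
          (if k - 1 = n then C else state a X s M (k - 1 - s) \<omega>)) =
       p k * ((if k = n then C else state a' X s M (k - s) \<omega>) + X k \<omega> -
          (if k - 1 = n then C else state a' X s M (k - 1 - s) \<omega>))"
    by auto
qed

lemma mstar_step_cong:
  assumes "\<forall>j. start_idx n i < j \<longrightarrow> j < n \<longrightarrow> ms j = ms' j"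
  shows "mstar_step P X p n C ms i = mstar_step P X p n C ms' i"
proof -
  have "Jfrom P X p n C ms (start_idx n i) = Jfrom P X p n C ms' (start_idx n i)"
    unfolding Jfrom_def
    by (rule ext, rule arg_cong[where f="integral\<^sup>L P"], rule ext, rule cost_cong_res)
      (use assms in \<open>auto simp: eff_res_def\<close>)
  then show ?thesis unfolding mstar_step_def by simp
qed

lemma mvec_stable:
  assumes "1 \<le> k" "n - d \<le> k"
  shows "mvec P X p n C (d + e) k = mvec P X p n C d k"
proof (induction e)
  case (Suc e)
  have "k \<noteq> n - Suc (d + e)" using assms by arith
  then show ?case using Suc by (simp add: Let_def)
qed simp

lemma opt_res_fixpoint:
  assumes k: "1 \<le> k" "k < n"
  shows "opt_res P X p n C k = mstar_step P X p n C (opt_res P X p n C) k"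
proof -
  define d where "d = n - 1 - k"
  have kd: "k = n - Suc d" using k by (simp add: d_def)
  have opt_res_eq: "opt_res P X p n C j = mvec P X p n C e j" if "e \<le> n - 1" "n - e \<le> j" "1 \<le> j" for e j
  proof -
    have "n - 1 = e + (n - 1 - e)" using that by simp
    then show ?thesis unfolding opt_res_def using mvec_stable that by metis
  qed
  have "opt_res P X p n C k = mvec P X p n C (Suc d) k"
    using k by (intro opt_res_eq) (auto simp: d_def)
  also have "\<dots> = mstar_step P X p n C (mvec P X p n C d) k"
    using kd by (simp add: Let_def)
  also have "\<dots> = mstar_step P X p n C (opt_res P X p n C) k"
  proof (intro mstar_step_cong allI impI)
    fix j assume "start_idx n k < j" "j < n"
    then show "mvec P X p n C d j = opt_res P X p n C j"
      using k by (intro opt_res_eq[symmetric]) (auto simp: start_idx_def d_def)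
  qed
  finally show ?thesis .
qed

text \<open>With \<open>coord\<close> as demand process, the cost becomes a function of the demand vector \<open>z\<close>,
  which depends only on the coordinates after the starting period.\<close>

definition coord :: "nat \<Rightarrow> (nat \<Rightarrow> real) \<Rightarrow> real" where
  "coord k z = z k"

lemma state_eq_state_coord: "state a X i M j \<omega> = state a coord i M j (\<lambda>k. X k \<omega>)"
  by (induction j) (auto simp: coord_def)

lemma cost_eq_cost_coord: "cost p a X n C i M \<omega> = cost p a coord n C i M (\<lambda>k. X k \<omega>)"
proof -
  have "level a X n C i M k \<omega> = level a coord n C i M k (\<lambda>k. X k \<omega>)" for k
    unfolding level_def using state_eq_state_coord by metis
  then show ?thesis unfolding cost_def by (simp add: coord_def)
qed

lemma state_coord_cong:
  assumes "i + j \<le> n" "\<forall>k\<in>{i+1..n}. z k = z' k"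
  shows "state a coord i M j z = state a coord i M j z'"
  using assms by (induction j) (auto simp: coord_def)

lemma cost_coord_cong:
  assumes "\<forall>k\<in>{i+1..n}. z k = z' k"
  shows "cost p a coord n C i M z = cost p a coord n C i M z'"
  unfolding cost_def level_def
proof (intro sum.cong refl)
  fix k assume k: "k \<in> {i+1..n}"
  have "state a coord i M (k - i) z = state a coord i M (k - i) z'"
    using k assms by (intro state_coord_cong) auto
  moreover have "state a coord i M (k - 1 - i) z = state a coord i M (k - 1 - i) z'"
    using k assms by (intro state_coord_cong) auto
  moreover have "z k = z' k" using k assms by auto
  ultimately show "p k * ((if k = n then C else state a coord i M (k - i) z) + coord k z -
          (if k - 1 = n then C else state a coord i M (k - 1 - i) z)) =
         p k * ((if k = n then C else state a coord i M (k - i) z') + coord k z' -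
          (if k - 1 = n then C else state a coord i M (k - 1 - i) z'))"
    by (simp add: coord_def)
qed

lemma cost_eq_cost_coord_restrict:
  "cost p a X n C i M \<omega> = cost p a coord n C i M (restrict (\<lambda>k. X k \<omega>) {i+1..n})"
  unfolding cost_eq_cost_coord[of p a X n C i M \<omega>] by (intro cost_coord_cong) auto

lemma state_coord_measurable:
  assumes "i + j \<le> n"
  shows "(\<lambda>w. state a coord i (fst w) j (snd w))
           \<in> borel_measurable (borel \<Otimes>\<^sub>M PiM {i+1..n} (\<lambda>_. borel))"
  using assms
proof (induction j)
  case (Suc j)
  have "(\<lambda>w. snd w (i + Suc j)) \<in> borel_measurable (borel \<Otimes>\<^sub>M PiM {i+1..n} (\<lambda>_. borel))"
    using Suc.prems by (intro measurable_compose[OF measurable_snd measurable_component_singleton]) auto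
  then show ?case using Suc by (simp add: coord_def)
qed simp

lemma cost_coord_measurable:
  "(\<lambda>w. cost p a coord n C i (fst w) (snd w)) \<in> borel_measurable (borel \<Otimes>\<^sub>M PiM {i+1..n} (\<lambda>_. borel))"
  unfolding cost_def level_def
proof (intro borel_measurable_sum borel_measurable_times borel_measurable_const borel_measurable_add
    borel_measurable_diff measurable_If)
  fix k assume k: "k \<in> {i+1..n}"
  show "(\<lambda>w. state a coord i (fst w) (k - i) (snd w)) \<in> borel_measurable (borel \<Otimes>\<^sub>M PiM {i+1..n} (\<lambda>_. borel))"
    using k by (intro state_coord_measurable) auto
  show "(\<lambda>w. state a coord i (fst w) (k - 1 - i) (snd w)) \<in> borel_measurable (borel \<Otimes>\<^sub>M PiM {i+1..n} (\<lambda>_. borel))"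
    using k by (intro state_coord_measurable) auto
  show "(\<lambda>w. coord k (snd w)) \<in> borel_measurable (borel \<Otimes>\<^sub>M PiM {i+1..n} (\<lambda>_. borel))"
    unfolding coord_def
    using k by (intro measurable_compose[OF measurable_snd measurable_component_singleton]) auto
qed auto

lemma refill_cost_lipschitz:
  assumes J: "\<And>u v. \<bar>J u - J v\<bar> \<le> L * \<bar>u - v\<bar>" and L: "0 \<le> L"
  shows "\<bar>refill_cost q a J x M - refill_cost q a J x M'\<bar> \<le> (2 * \<bar>q\<bar> + L) * \<bar>M - M'\<bar>"
proof -
  let ?d = "max a (M - x) - max a (M' - x)"
  have l1: "\<bar>?d\<bar> \<le> \<bar>M - M'\<bar>" by (auto simp: max_def)
  have l2: "\<bar>J (max a (M - x)) - J (max a (M' - x))\<bar> \<le> L * \<bar>M - M'\<bar>"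
    using J[of "max a (M - x)" "max a (M' - x)"] l1 L by (meson mult_left_mono order_trans)
  have "\<bar>?d - (M - M')\<bar> \<le> 2 * \<bar>M - M'\<bar>"
    using l1 abs_triangle_ineq4[of ?d "M - M'"] by linarith
  then have l3: "\<bar>q * (?d - (M - M'))\<bar> \<le> \<bar>q\<bar> * (2 * \<bar>M - M'\<bar>)"
    unfolding abs_mult by (intro mult_left_mono) auto
  have "refill_cost q a J x M - refill_cost q a J x M'
      = q * (?d - (M - M')) + (J (max a (M - x)) - J (max a (M' - x)))"
    unfolding refill_cost_def by (simp add: algebra_simps)
  then have "\<bar>refill_cost q a J x M - refill_cost q a J x M'\<bar>
      \<le> \<bar>q * (?d - (M - M'))\<bar> + \<bar>J (max a (M - x)) - J (max a (M' - x))\<bar>"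
    by (simp add: abs_triangle_ineq)
  also have "\<dots> \<le> (2 * \<bar>q\<bar> + L) * \<bar>M - M'\<bar>" using l2 l3 by (simp add: algebra_simps)
  finally show ?thesis .
qed

lemma refill_cost_has_derivative:
  assumes J: "\<And>y. (J has_real_derivative J' y) (at y)" and x: "M0 - x \<noteq> a"
  shows "((\<lambda>M. refill_cost q a J x M) has_real_derivative (if M0 - x < a then - q else J' (M0 - x))) (at M0)"
proof (cases "M0 - x < a")
  case True
  have "((\<lambda>M. q * (a + x - M) + J a) has_real_derivative - q) (at M0)"
    by (auto intro!: derivative_eq_intros)
  then have "((\<lambda>M. refill_cost q a J x M) has_real_derivative - q) (at M0)"
  proof (rule has_field_derivative_transform_within_open[where S="{M. M - x < a}"])
    show "open {M. M - x < a}" by (intro open_Collect_less continuous_intros)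
  qed (use True in \<open>auto simp: refill_cost_def max_def\<close>)
  then show ?thesis using True by simp
next
  case False
  then have xa: "a < M0 - x" using x by auto
  have "((\<lambda>M. J (M + - x)) has_real_derivative J' (M0 - x)) (at M0)"
    using DERIV_shift[THEN iffD1, OF J[of "M0 + - x"]] by simp
  then have "((\<lambda>M. refill_cost q a J x M) has_real_derivative J' (M0 - x)) (at M0)"
  proof (rule has_field_derivative_transform_within_open[where S="{M. a < M - x}"])
    show "open {M. a < M - x}" by (intro open_Collect_less continuous_intros)
  qed (use xa in \<open>auto simp: refill_cost_def max_def\<close>)
  then show ?thesis using False by simp
qed

section \<open>Expected cost\<close>

locale tou_storage = prob_space P for P :: "'a measure" +
  fixes X :: "nat \<Rightarrow> 'a \<Rightarrow> real" and f :: "nat \<Rightarrow> real \<Rightarrow> real" and p :: "nat \<Rightarrow> real" and n :: nat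
  assumes n_ge_2: "n \<ge> 2"
    and p_last_min: "\<forall>k\<in>{1..n}. p n \<le> p k"
    and p_nxt_neq: "\<forall>k\<in>{1..n}. p k \<noteq> p (nxt n k)"
    and indep_demands: "indep_vars (\<lambda>_. borel) X {1..n}"
    and demand_density: "\<forall>k\<in>{1..n}. distributed P lborel (X k) (\<lambda>x. ennreal (f k x))"
    and density_pos: "\<forall>k\<in>{1..n}. \<forall>x. f k x \<ge> 0 \<and> (f k x > 0 \<longleftrightarrow> x \<ge> 0)"
    and integrable_demand: "\<forall>k\<in>{1..n}. integrable P (X k)"
begin

lemma X_measurable[measurable]: "k \<in> {1..n} \<Longrightarrow> X k \<in> borel_measurable P"
  using distributed_measurable[OF demand_density[rule_format]] by simp

definition exp_cost :: "(nat \<Rightarrow> real) \<Rightarrow> real \<Rightarrow> nat \<Rightarrow> real \<Rightarrow> real" where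
  "exp_cost a C i M = (\<integral>\<omega>. cost p a X n C i M \<omega> \<partial>P)"

definition cost_lip :: real where
  "cost_lip = (\<Sum>k\<in>{1..n}. 2 * \<bar>p k\<bar>)"

lemma cost_lip_nonneg: "0 \<le> cost_lip"
  unfolding cost_lip_def by (intro sum_nonneg) auto

lemma restrict_demands_measurable:
  "I \<subseteq> {1..n} \<Longrightarrow> (\<lambda>\<omega>. restrict (\<lambda>k. X k \<omega>) I) \<in> measurable P (PiM I (\<lambda>_. borel))"
  by (intro measurable_restrict) auto

lemma cost_measurable[measurable]: "cost p a X n C i M \<in> borel_measurable P"
proof -
  have "(\<lambda>\<omega>. cost p a coord n C i (fst (M, restrict (\<lambda>k. X k \<omega>) {i+1..n}))
                                 (snd (M, restrict (\<lambda>k. X k \<omega>) {i+1..n}))) \<in> borel_measurable P"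
    by (rule measurable_compose[OF _ cost_coord_measurable])
      (intro measurable_Pair measurable_const restrict_demands_measurable; auto)
  moreover have "cost p a X n C i M = (\<lambda>\<omega>. cost p a coord n C i M (restrict (\<lambda>k. X k \<omega>) {i+1..n}))"
    by (rule ext) (rule cost_eq_cost_coord_restrict)
  ultimately show ?thesis by (simp only: fst_conv snd_conv)
qed

lemma cost_integrable: "integrable P (cost p a X n C i M)"
proof (rule Bochner_Integration.integrable_bound)
  define B where "B \<omega> = \<bar>C\<bar> + \<bar>M\<bar> + (\<Sum>k'\<in>{i+1..n}. \<bar>a k'\<bar> + \<bar>X k' \<omega>\<bar>)" for \<omega>
  have "integrable P B" unfolding B_def
    by (intro Bochner_Integration.integrable_add Bochner_Integration.integrable_sum integrable_const integrable_abs)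
      (use integrable_demand in auto)
  then show "integrable P (\<lambda>\<omega>. \<Sum>k\<in>{i+1..n}. \<bar>p k\<bar> * (2 * B \<omega> + \<bar>X k \<omega>\<bar>))"
    by (intro Bochner_Integration.integrable_sum integrable_mult_right Bochner_Integration.integrable_add integrable_abs)
      (use integrable_demand in auto)
  show "AE \<omega> in P. norm (cost p a X n C i M \<omega>) \<le> norm (\<Sum>k\<in>{i+1..n}. \<bar>p k\<bar> * (2 * B \<omega> + \<bar>X k \<omega>\<bar>))"
  proof (rule AE_I2)
    fix \<omega>
    have "\<bar>cost p a X n C i M \<omega>\<bar>
        \<le> (\<Sum>k\<in>{i+1..n}. \<bar>p k * (level a X n C i M k \<omega> + X k \<omega> - level a X n C i M (k - 1) \<omega>)\<bar>)"
      unfolding cost_def by (rule sum_abs)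
    also have "\<dots> \<le> (\<Sum>k\<in>{i+1..n}. \<bar>p k\<bar> * (2 * B \<omega> + \<bar>X k \<omega>\<bar>))"
    proof (intro sum_mono)
      fix k assume k: "k \<in> {i+1..n}"
      have "\<bar>level a X n C i M k \<omega> + X k \<omega> - level a X n C i M (k - 1) \<omega>\<bar> \<le> 2 * B \<omega> + \<bar>X k \<omega>\<bar>"
        using level_abs_le[of i k n a X C M \<omega>] level_abs_le[of i "k - 1" n a X C M \<omega>] k
        unfolding B_def by (intro abs_add_diff_le) auto
      then show "\<bar>p k * (level a X n C i M k \<omega> + X k \<omega> - level a X n C i M (k - 1) \<omega>)\<bar>
          \<le> \<bar>p k\<bar> * (2 * B \<omega> + \<bar>X k \<omega>\<bar>)"
        unfolding abs_mult by (intro mult_left_mono) auto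
    qed
    finally show "norm (cost p a X n C i M \<omega>) \<le> norm (\<Sum>k\<in>{i+1..n}. \<bar>p k\<bar> * (2 * B \<omega> + \<bar>X k \<omega>\<bar>))"
      by simp
  qed
qed simp

lemma exp_cost_lipschitz: "\<bar>exp_cost a C i M - exp_cost a C i M'\<bar> \<le> cost_lip * \<bar>M - M'\<bar>"
proof -
  have "\<bar>exp_cost a C i M - exp_cost a C i M'\<bar> = \<bar>\<integral>\<omega>. cost p a X n C i M \<omega> - cost p a X n C i M' \<omega> \<partial>P\<bar>"
    unfolding exp_cost_def by (simp add: Bochner_Integration.integral_diff[OF cost_integrable cost_integrable])
  also have "\<dots> \<le> (\<integral>\<omega>. \<bar>cost p a X n C i M \<omega> - cost p a X n C i M' \<omega>\<bar> \<partial>P)"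
    by (rule integral_abs_bound)
  also have "\<dots> \<le> (\<integral>\<omega>. cost_lip * \<bar>M - M'\<bar> \<partial>P)"
    unfolding cost_lip_def
    by (intro integral_mono Bochner_Integration.integrable_diff integrable_abs cost_integrable cost_lipschitz) auto
  also have "\<dots> = cost_lip * \<bar>M - M'\<bar>" by (simp add: prob_space)
  finally show ?thesis .
qed

lemma exp_cost_continuous: "continuous_on UNIV (exp_cost a C i)"
proof -
  have "lipschitz_on cost_lip UNIV (exp_cost a C i)"
    unfolding lipschitz_on_def using exp_cost_lipschitz cost_lip_nonneg by (auto simp: dist_real_def)
  then show ?thesis by (rule lipschitz_on_continuous_on)
qed

lemma exp_cost_last_period: "exp_cost a C (n - 1) M = p n * (C + (\<integral>\<omega>. X n \<omega> \<partial>P) - M)"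
proof -
  have "cost p a X n C (n - 1) M = (\<lambda>\<omega>. p n * (C + X n \<omega> - M))"
    using n_ge_2 by (intro ext cost_last_period) auto
  then have "exp_cost a C (n - 1) M = (\<integral>\<omega>. p n * (C + X n \<omega> - M) \<partial>P)"
    unfolding exp_cost_def by simp
  also have "\<dots> = p n * (C + (\<integral>\<omega>. X n \<omega> \<partial>P) - M)"
    using integrable_demand n_ge_2
    by (simp add: Bochner_Integration.integral_diff Bochner_Integration.integral_add prob_space)
  finally show ?thesis .
qed

abbreviation demand :: "nat \<Rightarrow> real measure" where
  "demand k \<equiv> distr P borel (X k)"

text \<open>By independence, the demand of the next period can be integrated out first, against its
  distribution.\<close>

lemma exp_cost_recursion:
  assumes sn: "Suc s < n"
  shows "exp_cost a C s M = (\<integral>x. refill_cost (p (Suc s)) (a (Suc s)) (exp_cost a C (Suc s)) x M \<partial>demand (Suc s))"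
    and "integrable (demand (Suc s)) (\<lambda>x. refill_cost (p (Suc s)) (a (Suc s)) (exp_cost a C (Suc s)) x M)"
proof -
  define k where "k = Suc s"
  define B where "B = {k+1..n}"
  define \<Phi> where "\<Phi> x z = refill_cost (p k) (a k) (\<lambda>r. cost p a coord n C k r z) x M" for x z
  have kB: "k \<in> {1..n}" "B \<subseteq> {1..n}" "k \<notin> B" using sn by (auto simp: k_def B_def)
  have path: "cost p a X n C s M \<omega> = \<Phi> (X k \<omega>) (restrict (\<lambda>j. X j \<omega>) B)" for \<omega>
    unfolding cost_unfold_first[OF sn] \<Phi>_def k_def B_def
    by (simp add: cost_eq_cost_coord_restrict[of p a X n C "Suc s"])
  have inner: "(\<integral>\<omega>. \<Phi> x (restrict (\<lambda>j. X j \<omega>) B) \<partial>P) = refill_cost (p k) (a k) (exp_cost a C k) x M" for x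
  proof -
    show ?thesis
      unfolding \<Phi>_def refill_cost_def exp_cost_def B_def using cost_integrable
      by (simp add: Bochner_Integration.integral_add prob_space
          cost_eq_cost_coord_restrict[of p a X n C k, simplified, symmetric])
  qed
  have meas: "(\<lambda>w. \<Phi> (fst w) (snd w)) \<in> borel_measurable (borel \<Otimes>\<^sub>M PiM B (\<lambda>_. borel))"
  proof -
    have "(\<lambda>w. (max (a k) (M - fst w), snd w))
        \<in> measurable (borel \<Otimes>\<^sub>M PiM B (\<lambda>_. borel)) (borel \<Otimes>\<^sub>M PiM B (\<lambda>_. borel))"
      by measurable
    from measurable_compose[OF this cost_coord_measurable[of p a n C k, folded B_def]]
    have "(\<lambda>w. cost p a coord n C k (max (a k) (M - fst w)) (snd w))
        \<in> borel_measurable (borel \<Otimes>\<^sub>M PiM B (\<lambda>_. borel))"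
      by simp
    then show ?thesis unfolding \<Phi>_def refill_cost_def by measurable
  qed
  have int: "integrable P (\<lambda>\<omega>. \<Phi> (X k \<omega>) (restrict (\<lambda>j. X j \<omega>) B))"
    using cost_integrable[of a C s M] by (simp add: path[symmetric])
  note rec = integral_indep_coordinate[OF indep_demands kB meas int]
  have "exp_cost a C s M = (\<integral>\<omega>. \<Phi> (X k \<omega>) (restrict (\<lambda>j. X j \<omega>) B) \<partial>P)"
    unfolding exp_cost_def path ..
  also have "\<dots> = (\<integral>x. refill_cost (p k) (a k) (exp_cost a C k) x M \<partial>demand k)"
    unfolding rec(1) inner ..
  finally show "exp_cost a C s M = (\<integral>x. refill_cost (p (Suc s)) (a (Suc s)) (exp_cost a C (Suc s)) x M \<partial>demand (Suc s))"
    unfolding k_def .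
  show "integrable (demand (Suc s)) (\<lambda>x. refill_cost (p (Suc s)) (a (Suc s)) (exp_cost a C (Suc s)) x M)"
    using rec(2) unfolding inner k_def .
qed

lemma prob_space_demand: "k \<in> {1..n} \<Longrightarrow> prob_space (demand k)"
  by (rule prob_space_distr) simp

lemma density_measurable: "k \<in> {1..n} \<Longrightarrow> (\<lambda>x. ennreal (f k x)) \<in> borel_measurable borel"
  using distributed_borel_measurable[OF demand_density[rule_format]] by simp

lemma emeasure_demand:
  assumes k: "k \<in> {1..n}" and A: "A \<in> sets borel"
  shows "emeasure (demand k) A = (\<integral>\<^sup>+x. ennreal (f k x) * indicator A x \<partial>lborel)"
proof -
  have "demand k = distr P lborel (X k)" by (rule distr_cong) auto
  also have "\<dots> = density lborel (\<lambda>x. ennreal (f k x))"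
    by (rule distributed_distr_eq_density[OF demand_density[rule_format, OF k]])
  finally show ?thesis using A density_measurable[OF k] by (simp add: emeasure_density)
qed

lemma emeasure_demand_eq_0:
  assumes k: "k \<in> {1..n}" and A: "A \<in> sets borel" and N: "AE x in lborel. x \<notin> A \<or> f k x = 0"
  shows "emeasure (demand k) A = 0"
proof -
  have "AE x in lborel. ennreal (f k x) * indicator A x = 0"
    using N by eventually_elim (auto simp: indicator_def)
  then have "(\<integral>\<^sup>+x. ennreal (f k x) * indicator A x \<partial>lborel) = (\<integral>\<^sup>+(x::real). 0 \<partial>lborel)"
    by (rule nn_integral_cong_AE)
  then show ?thesis unfolding emeasure_demand[OF k A] by simp
qed

lemma AE_demand_neq: "k \<in> {1..n} \<Longrightarrow> AE x in demand k. x \<noteq> c"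
proof -
  assume k: "k \<in> {1..n}"
  have "emeasure (demand k) {c} = 0"
  proof (rule emeasure_demand_eq_0[OF k])
    show "AE x in lborel. x \<notin> {c} \<or> f k x = 0"
      using AE_lborel_singleton[of c] by eventually_elim auto
  qed simp
  then show ?thesis
    by (subst AE_iff_measurable[of "{c}"]) auto
qed

lemma AE_demand_pos: "k \<in> {1..n} \<Longrightarrow> AE x in demand k. 0 < x"
proof -
  assume k: "k \<in> {1..n}"
  have "f k x = 0" if "x < 0" for x
    using density_pos k that by (metis atLeastAtMost_iff linorder_not_le order_less_le)
  then have "AE x in lborel. x \<notin> {..0} \<or> f k x = 0"
    using AE_lborel_singleton[of 0] by (auto elim!: AE_mp simp: le_less)
  then have "emeasure (demand k) {..0} = 0"
    by (intro emeasure_demand_eq_0[OF k]) auto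
  moreover have "{x \<in> space (demand k). \<not> 0 < x} = {..0}" by auto
  ultimately show ?thesis
    by (subst AE_iff_measurable[of "{..0}"]) simp_all
qed

lemma emeasure_demand_interval_pos:
  assumes k: "k \<in> {1..n}" and lu: "0 \<le> l" "l < u"
  shows "emeasure (demand k) {l<..<u} \<noteq> 0"
proof
  assume "emeasure (demand k) {l<..<u} = 0"
  then have "(\<integral>\<^sup>+x. ennreal (f k x) * indicator {l<..<u} x \<partial>lborel) = 0"
    using emeasure_demand[OF k] by simp
  then have "AE x in lborel. ennreal (f k x) * indicator {l<..<u} x = 0"
    using density_measurable[OF k] by (subst (asm) nn_integral_0_iff_AE) auto
  then have "AE x in lborel. x \<notin> {l<..<u}"
  proof eventually_elim
    fix x assume "ennreal (f k x) * indicator {l<..<u} x = 0"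
    moreover have "x \<in> {l<..<u} \<Longrightarrow> f k x > 0" using density_pos k lu by auto
    ultimately show "x \<notin> {l<..<u}" by (auto simp: indicator_def)
  qed
  then have "emeasure lborel {l<..<u} = 0"
    by (subst (asm) AE_iff_measurable[of "{l<..<u}"]) auto
  then show False using lu by simp
qed

lemma integrable_demand_id: "k \<in> {1..n} \<Longrightarrow> integrable (demand k) (\<lambda>x. x)"
  using integrable_demand by (subst integrable_distr_eq) auto

section \<open>Marginal value of stored energy\<close>

definition p_max :: real where
  "p_max = Max (p ` {1..n})"

lemma p_le_p_max: "k \<in> {1..n} \<Longrightarrow> p k \<le> p_max"
  unfolding p_max_def by (intro Max_ge) auto

lemma p_last_le: "k \<in> {1..n} \<Longrightarrow> p n \<le> p k"
  using p_last_min by auto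

lemma nxt_eq_Suc: "k < n \<Longrightarrow> nxt n k = Suc k"
  by (simp add: nxt_def)

definition resv :: "real \<Rightarrow> nat \<Rightarrow> real" where
  "resv C k = eff_res C (opt_res P X p n C) k"

definition opt_cost :: "real \<Rightarrow> nat \<Rightarrow> real \<Rightarrow> real" where
  "opt_cost C s = exp_cost (resv C) C s"

text \<open>\<open>mval C s\<close> is the marginal value \<open>-J'\<^sub>s\<close> of stored energy at the end of period \<open>s\<close>.
  As a function of the level \<open>y = M - X\<^sub>s\<^sub>+\<^sub>1\<close> before the reservation of period \<open>s + 1\<close> is
  enforced, that marginal value is \<open>mval_next C s y\<close>: below the reservation, the missing energy
  is bought at price \<open>p (Suc s)\<close>.\<close>

definition mval :: "real \<Rightarrow> nat \<Rightarrow> real \<Rightarrow> real" where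
  "mval C s M = - deriv (opt_cost C s) M"

definition mval_next :: "real \<Rightarrow> nat \<Rightarrow> real \<Rightarrow> real" where
  "mval_next C s y = (if y \<le> resv C (Suc s) then p (Suc s) else mval C (Suc s) y)"

lemma Jfrom_opt_res: "Jfrom P X p n C (opt_res P X p n C) s = opt_cost C s"
  unfolding Jfrom_def opt_cost_def exp_cost_def resv_def by (rule ext) simp

lemma mstar_step_opt_res:
  "mstar_step P X p n C (opt_res P X p n C) i =
    (if p (nxt n i) \<le> p i then 0 else Inf {ereal M |M. 0 \<le> M \<and> p i = mval C (start_idx n i) M})"
  unfolding mstar_step_def Jfrom_opt_res mval_def by simp

lemma opt_res_eq:
  assumes "1 \<le> k" "k < n"
  shows "opt_res P X p n C k
    = (if p (Suc k) \<le> p k then 0 else Inf {ereal M |M. 0 \<le> M \<and> p k = mval C k M})"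
  using assms by (simp add: opt_res_fixpoint mstar_step_opt_res start_idx_def nxt_eq_Suc)

lemma opt_res_nonneg: "1 \<le> k \<Longrightarrow> k < n \<Longrightarrow> 0 \<le> opt_res P X p n C k"
  by (auto simp: opt_res_eq intro!: Inf_greatest)

lemma ereal_resv:
  assumes "0 \<le> C" "1 \<le> k" "k < n"
  shows "ereal (resv C k) = min (opt_res P X p n C k) (ereal C)"
proof -
  have "0 \<le> min (opt_res P X p n C k) (ereal C)" "min (opt_res P X p n C k) (ereal C) \<le> ereal C"
    using assms opt_res_nonneg[of k C] by auto
  then show ?thesis unfolding resv_def eff_res_def
    by (cases "min (opt_res P X p n C k) (ereal C)") auto
qed

lemma resv_bounds:
  assumes "0 \<le> C" "1 \<le> k" "k < n"
  shows "0 \<le> resv C k" "resv C k \<le> C"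
proof -
  have "ereal 0 \<le> ereal (resv C k)" "ereal (resv C k) \<le> ereal C"
    unfolding ereal_resv[OF assms] using assms opt_res_nonneg[of k C] by (auto simp: zero_ereal_def)
  then show "0 \<le> resv C k" "resv C k \<le> C" by simp_all
qed

lemma resv_eq_0:
  assumes "0 \<le> C" "1 \<le> k" "k < n" "p (Suc k) \<le> p k"
  shows "resv C k = 0"
  using ereal_resv[OF assms(1-3)] opt_res_eq[OF assms(2,3), of C] assms by (simp add: min_def)

lemma resv_le_solution:
  assumes "0 \<le> C" "1 \<le> k" "k < n" and y: "0 \<le> y" "mval C k y = p k"
  shows "resv C k \<le> y"
proof -
  have "opt_res P X p n C k \<le> ereal y"
    unfolding opt_res_eq[OF assms(2,3)] using y by (auto intro!: Inf_lower)
  then have "ereal (resv C k) \<le> ereal y"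
    unfolding ereal_resv[OF assms(1-3)] by (simp add: min.coboundedI1)
  then show ?thesis by simp
qed

definition regular_stage :: "real \<Rightarrow> nat \<Rightarrow> bool" where
  "regular_stage C s \<longleftrightarrow>
     (\<forall>M. (opt_cost C s has_real_derivative - mval C s M) (at M)) \<and> continuous_on UNIV (mval C s)
     \<and> (\<forall>M\<le>0. mval C s M = p (Suc s)) \<and> (\<forall>M M'. M \<le> M' \<longrightarrow> M' \<le> C \<longrightarrow> mval C s M' \<le> mval C s M)
     \<and> (\<forall>M. p n \<le> mval C s M \<and> mval C s M \<le> p_max)"

lemma opt_cost_last_has_derivative: "(opt_cost C (n - 1) has_real_derivative - p n) (at M)"
  unfolding opt_cost_def exp_cost_last_period by (auto intro!: derivative_eq_intros)

lemma mval_last: "mval C (n - 1) M = p n"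
  unfolding mval_def using DERIV_imp_deriv[OF opt_cost_last_has_derivative] by simp

lemma regular_stage_last: "regular_stage C (n - 1)"
  unfolding regular_stage_def mval_last using opt_cost_last_has_derivative n_ge_2 p_le_p_max[of n]
  by (auto simp: Suc_diff_le)

lemma resv_lt_capacity:
  assumes C: "0 \<le> C" and k: "1 \<le> k" "k < n" and reg: "regular_stage C k"
    and lt: "resv C k < C" and y: "resv C k < y" "y \<le> C"
  shows "mval C k y \<le> p k"
proof -
  have cont: "continuous_on UNIV (mval C k)" and g0: "mval C k 0 = p (Suc k)"
    and mono: "\<And>M M'. M \<le> M' \<Longrightarrow> M' \<le> C \<Longrightarrow> mval C k M' \<le> mval C k M"
    using reg unfolding regular_stage_def by auto
  show ?thesis
  proof (cases "p (Suc k) \<le> p k")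
    case True
    then show ?thesis using mono[of 0 y] g0 y resv_bounds[OF C k] by simp
  next
    case False
    define S where "S = {M. 0 \<le> M \<and> p k = mval C k M}"
    have "opt_res P X p n C k \<noteq> \<infinity>"
      using ereal_resv[OF C k] lt by auto
    then have "S \<noteq> {}"
      using Inf_nonneg_solutions(1)[OF cont, of "p k"] False opt_res_eq[OF k, of C] by (auto simp: S_def)
    then obtain m where m: "m \<in> S" "Inf {ereal M |M. 0 \<le> M \<and> p k = mval C k M} = ereal m"
      using Inf_nonneg_solutions(2)[OF cont, of "p k"] unfolding S_def by blast
    have "ereal (resv C k) = min (ereal m) (ereal C)"
      using ereal_resv[OF C k] opt_res_eq[OF k, of C] False m(2) by simp
    then have "m < y" using lt y by (auto simp: min_def split: if_splits)
    then show ?thesis using mono[of m y] m(1) y by (simp add: S_def)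
  qed
qed

lemma resv_eq_capacity:
  assumes C: "0 \<le> C" and k: "1 \<le> k" "k < n"
    and eq: "resv C k = C" and pos: "0 < C"
  shows "p k < p (Suc k)" "\<And>y. 0 \<le> y \<Longrightarrow> y < C \<Longrightarrow> mval C k y \<noteq> p k"
proof -
  show "p k < p (Suc k)"
    using resv_eq_0[OF C k] eq pos by force
  show "mval C k y \<noteq> p k" if "0 \<le> y" "y < C" for y
    using resv_le_solution[OF C k that(1)] eq that(2) by force
qed

lemma mval_next_facts:
  assumes C: "0 \<le> C" and sn: "Suc s < n" and reg: "regular_stage C (Suc s)"
  shows mval_next_antitone: "\<And>y y'. y \<le> y' \<Longrightarrow> y' \<le> C \<Longrightarrow> mval_next C s y' \<le> mval_next C s y"
    and mval_next_nonpos: "\<And>y. y \<le> 0 \<Longrightarrow> mval_next C s y = p (Suc s)"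
    and mval_next_bounds: "\<And>y. p n \<le> mval_next C s y \<and> mval_next C s y \<le> p_max"
    and mval_next_abs_le: "\<And>y. \<bar>mval_next C s y\<bar> \<le> \<bar>p n\<bar> + \<bar>p_max\<bar>"
    and mval_next_measurable: "mval_next C s \<in> borel_measurable borel"
    and isCont_mval_next: "\<And>y. y \<noteq> resv C (Suc s) \<Longrightarrow> isCont (mval_next C s) y"
proof -
  define k where "k = Suc s"
  have kn: "k \<in> {1..n}" "1 \<le> k" "k < n" using sn by (auto simp: k_def)
  have h: "mval_next C s y = (if y \<le> resv C k then p k else mval C k y)" for y
    unfolding mval_next_def k_def ..
  have cont: "continuous_on UNIV (mval C k)"
    and mono: "\<And>M M'. M \<le> M' \<Longrightarrow> M' \<le> C \<Longrightarrow> mval C k M' \<le> mval C k M"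
    and bnd: "\<And>M. p n \<le> mval C k M \<and> mval C k M \<le> p_max"
    using reg unfolding regular_stage_def k_def by auto
  show hb: "p n \<le> mval_next C s y \<and> mval_next C s y \<le> p_max" for y
    using bnd p_last_le[OF kn(1)] p_le_p_max[OF kn(1)] by (simp add: h)
  show "\<bar>mval_next C s y\<bar> \<le> \<bar>p n\<bar> + \<bar>p_max\<bar>" for y
    using hb[of y] by (simp add: abs_le_iff) linarith
  show "mval_next C s y = p (Suc s)" if "y \<le> 0" for y
    using that resv_bounds[OF C kn(2,3)] by (simp add: h k_def)
  show "mval_next C s y' \<le> mval_next C s y" if "y \<le> y'" "y' \<le> C" for y y'
    using that mono[of y y'] resv_lt_capacity[OF C kn(2,3) reg[folded k_def], of y']
    by (auto simp: h)
  have [measurable]: "mval C k \<in> borel_measurable borel"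
    using cont by (rule borel_measurable_continuous_onI)
  have "(\<lambda>y. if y \<le> resv C k then p k else mval C k y) \<in> borel_measurable borel"
    by measurable
  then show "mval_next C s \<in> borel_measurable borel" by (simp add: h[abs_def])
  show "isCont (mval_next C s) y" if "y \<noteq> resv C (Suc s)" for y
  proof (cases "y < resv C k")
    case True
    have "eventually (\<lambda>z. z \<in> {..<resv C k}) (nhds y)" using True by (intro eventually_nhds_in_open) auto
    then have "eventually (\<lambda>z. mval_next C s z = p k) (nhds y)" by eventually_elim (simp add: h)
    then show ?thesis by (subst isCont_cong) auto
  next
    case False
    then have "resv C k < y" using that by (simp add: k_def)
    then have "eventually (\<lambda>z. z \<in> {resv C k<..}) (nhds y)" by (intro eventually_nhds_in_open) auto
    then have "eventually (\<lambda>z. mval_next C s z = mval C k z) (nhds y)" by eventually_elim (simp add: h)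
    then show ?thesis using cont by (subst isCont_cong) (auto simp: continuous_on_eq_continuous_at)
  qed
qed

lemma opt_cost_has_derivative:
  assumes C: "0 \<le> C" and sn: "Suc s < n" and reg: "regular_stage C (Suc s)"
  shows "(opt_cost C s has_real_derivative - (\<integral>x. mval_next C s (M0 - x) \<partial>demand (Suc s))) (at M0)"
proof -
  define k where "k = Suc s"
  define \<phi> where "\<phi> = refill_cost (p k) (resv C k) (opt_cost C k)"
  have kn: "k \<in> {1..n}" using sn by (auto simp: k_def)
  interpret D: prob_space "demand k" using prob_space_demand[OF kn] .
  have h: "mval_next C s y = (if y \<le> resv C k then p k else mval C k y)" for y
    unfolding mval_next_def k_def ..
  have Jder: "\<And>M. (opt_cost C k has_real_derivative - mval C k M) (at M)"
    using reg unfolding regular_stage_def k_def by auto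
  have Jrep: "opt_cost C s = (\<lambda>M. \<integral>x. \<phi> x M \<partial>demand k)"
    unfolding opt_cost_def \<phi>_def k_def by (rule ext) (rule exp_cost_recursion(1)[OF sn])
  have \<phi>int: "integrable (demand k) (\<lambda>x. \<phi> x M)" for M
    unfolding opt_cost_def \<phi>_def k_def by (rule exp_cost_recursion(2)[OF sn])
  have \<phi>cost_lip: "\<bar>\<phi> x M - \<phi> x M'\<bar> \<le> (2 * \<bar>p k\<bar> + cost_lip) * \<bar>M - M'\<bar>" for M M' x
    unfolding \<phi>_def opt_cost_def by (intro refill_cost_lipschitz exp_cost_lipschitz cost_lip_nonneg)
  have [measurable]: "mval_next C s \<in> borel_measurable borel"
    using mval_next_measurable[OF C sn reg] .
  have "((\<lambda>M. \<integral>x. \<phi> x M \<partial>demand k) has_real_derivative (\<integral>x. - mval_next C s (M0 - x) \<partial>demand k)) (at M0)"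
  proof (rule has_real_derivative_integral_lipschitz[where \<phi>="\<lambda>M x. \<phi> x M", OF _ \<phi>int \<phi>cost_lip])
    show "AE x in demand k. ((\<lambda>M. \<phi> x M) has_real_derivative - mval_next C s (M0 - x)) (at M0)"
      using AE_demand_neq[OF kn, of "M0 - resv C k"]
    proof eventually_elim
      fix x assume "x \<noteq> M0 - resv C k"
      then have ne: "M0 - x \<noteq> resv C k" by auto
      then have "- mval_next C s (M0 - x) = (if M0 - x < resv C k then - p k else - mval C k (M0 - x))"
        by (simp add: h)
      with refill_cost_has_derivative[OF Jder ne, of "p k"]
      show "((\<lambda>M. \<phi> x M) has_real_derivative - mval_next C s (M0 - x)) (at M0)"
        unfolding \<phi>_def by simp
    qed
  qed (measurable, unfold_locales)
  then show ?thesis unfolding Jrep k_def by simp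
qed

lemma regular_stage_step:
  assumes C: "0 \<le> C" and sn: "Suc s < n" and reg: "regular_stage C (Suc s)"
  shows "regular_stage C s" and "\<And>M. mval C s M = (\<integral>x. mval_next C s (M - x) \<partial>demand (Suc s))"
proof -
  define k where "k = Suc s"
  define h where "h = mval_next C s"
  have kn: "k \<in> {1..n}" using sn by (auto simp: k_def)
  interpret D: prob_space "demand k" using prob_space_demand[OF kn] .
  have fin: "finite_measure (demand k)" by unfold_locales
  have hm[measurable]: "h \<in> borel_measurable borel"
    unfolding h_def using mval_next_measurable[OF C sn reg] .
  have habs: "\<bar>h y\<bar> \<le> \<bar>p n\<bar> + \<bar>p_max\<bar>" for y
    unfolding h_def using mval_next_abs_le[OF C sn reg] .
  have deriv: "(opt_cost C s has_real_derivative - (\<integral>x. h (M - x) \<partial>demand k)) (at M)" for M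
    unfolding h_def k_def using opt_cost_has_derivative[OF C sn reg] .
  have mval_eq: "mval C s M = (\<integral>x. h (M - x) \<partial>demand k)" for M
    unfolding mval_def using DERIV_imp_deriv[OF deriv[of M]] by simp
  then show "\<And>M. mval C s M = (\<integral>x. mval_next C s (M - x) \<partial>demand (Suc s))"
    unfolding h_def k_def by simp
  have "sets (demand k) = sets borel" by simp
  note translate = integral_translate_antitone[OF prob_space_demand[OF kn] this AE_demand_pos[OF kn]
      mval_next_measurable[OF C sn reg] mval_next_bounds[OF C sn reg], where c=C and q="p (Suc s)"]
  note h_facts = mval_next_antitone[OF C sn reg] mval_next_nonpos[OF C sn reg]
  have "continuous_on UNIV (mval C s)"
  proof (intro continuous_at_imp_continuous_on ballI)
    fix M0 :: real
    have "isCont (\<lambda>M. \<integral>x. h (M - x) \<partial>demand k) M0"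
      by (rule isCont_integral_translate[OF fin _ hm habs _ AE_demand_neq[OF kn], where b="resv C k"])
        (use isCont_mval_next[OF C sn reg] in \<open>auto simp: h_def k_def\<close>)
    then show "isCont (mval C s) M0" by (simp add: mval_eq[abs_def])
  qed
  moreover have "mval C s M = p (Suc s)" if "M \<le> 0" for M
    unfolding mval_eq h_def using h_facts that by (intro translate(2)) auto
  moreover have "mval C s M' \<le> mval C s M" if "M \<le> M'" "M' \<le> C" for M M'
    unfolding mval_eq h_def using h_facts that by (intro translate(1)) auto
  moreover have "p n \<le> mval C s M \<and> mval C s M \<le> p_max" for M
    unfolding mval_eq h_def using h_facts by (intro translate(3)) auto
  ultimately show "regular_stage C s"
    unfolding regular_stage_def using deriv mval_eq by auto
qed

lemma regular_stage: "0 \<le> C \<Longrightarrow> s < n \<Longrightarrow> regular_stage C s"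
proof -
  assume C: "0 \<le> C" and "s < n"
  then have "s \<le> n - 1" by simp
  then show "regular_stage C s"
  proof (induction s rule: inc_induct)
    case base
    show ?case by (rule regular_stage_last)
  next
    case (step s)
    then show ?case using regular_stage_step(1)[OF C] by simp
  qed
qed

lemma mval_eq_integral:
  "0 \<le> C \<Longrightarrow> Suc s < n \<Longrightarrow> mval C s M = (\<integral>x. mval_next C s (M - x) \<partial>demand (Suc s))"
  using regular_stage_step(2)[OF _ _ regular_stage] by simp

lemma mval_facts:
  assumes "0 \<le> C" "s < n"
  shows continuous_mval: "continuous_on UNIV (mval C s)"
    and mval_nonpos: "\<And>M. M \<le> 0 \<Longrightarrow> mval C s M = p (Suc s)"
    and mval_antitone: "\<And>M M'. M \<le> M' \<Longrightarrow> M' \<le> C \<Longrightarrow> mval C s M' \<le> mval C s M"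
  using regular_stage[OF assms] unfolding regular_stage_def by auto

lemma start_idx_lt: "i \<in> {1..n} \<Longrightarrow> start_idx n i < n"
  using n_ge_2 by (auto simp: start_idx_def)

lemma p_Suc_start_idx: "i \<in> {1..n} \<Longrightarrow> p (Suc (start_idx n i)) = p (nxt n i)"
  by (auto simp: start_idx_def nxt_def)

lemma MR_eq:
  assumes C: "0 \<le> C" and i: "i \<in> {1..n}"
  shows "MR P X p n C i = max 0 (mval C (start_idx n i) C - p i)"
proof -
  define g where "g = mval C (start_idx n i)"
  have s: "start_idx n i < n" using start_idx_lt[OF i] .
  have g0: "g 0 = p (nxt n i)"
    using mval_nonpos[OF C s, of 0] p_Suc_start_idx[OF i] by (simp add: g_def)
  have mono: "\<And>M M'. M \<le> M' \<Longrightarrow> M' \<le> C \<Longrightarrow> g M' \<le> g M"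
    unfolding g_def using mval_antitone[OF C s] .
  have "Mstar P X p n C i = mstar_step P X p n C (opt_res P X p n C) i"
    unfolding Mstar_def using opt_res_fixpoint[of i n P X p C] i by auto
  then have Ms: "Mstar P X p n C i = (if p (nxt n i) \<le> p i then 0 else Inf {ereal M |M. 0 \<le> M \<and> p i = g M})"
    unfolding mstar_step_opt_res g_def .
  have MR: "MR P X p n C i = (if Mstar P X p n C i \<le> ereal C then 0 else g C - p i)"
    unfolding MR_def Jopt_def Jfrom_opt_res g_def mval_def ..
  show ?thesis
  proof (cases "p (nxt n i) \<le> p i")
    case True
    then show ?thesis using mono[of 0 C] C g0 unfolding MR Ms g_def by simp
  next
    case False
    then show ?thesis
      using Inf_nonneg_solutions_le_iff[OF continuous_mval[OF C s] mono[unfolded g_def] C, of "p i"] g0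
      unfolding MR Ms g_def by auto
  qed
qed

lemma resv_capacity_cong:
  assumes C: "0 \<le> C" "0 \<le> C'" and k: "1 \<le> k" "k < n" and m: "m \<le> C" "m \<le> C'"
    and eq: "\<forall>M\<le>m. mval C k M = mval C' k M" and y: "y \<le> m"
  shows "y \<le> resv C k \<longleftrightarrow> y \<le> resv C' k"
proof -
  have oeq: "min (opt_res P X p n C k) (ereal m) = min (opt_res P X p n C' k) (ereal m)"
    unfolding opt_res_eq[OF k] using eq by (auto intro!: min_Inf_nonneg_solutions_cong)
  have "y \<le> resv C k \<longleftrightarrow> ereal y \<le> min (opt_res P X p n C k) (ereal C)"
    using ereal_resv[OF C(1) k] by (metis ereal_less_eq(3))
  also have "\<dots> \<longleftrightarrow> ereal y \<le> min (opt_res P X p n C k) (ereal m)" using y m by auto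
  also have "\<dots> \<longleftrightarrow> ereal y \<le> min (opt_res P X p n C' k) (ereal m)" unfolding oeq ..
  also have "\<dots> \<longleftrightarrow> ereal y \<le> min (opt_res P X p n C' k) (ereal C')" using y m by auto
  also have "\<dots> \<longleftrightarrow> y \<le> resv C' k"
    using ereal_resv[OF C(2) k] by (metis ereal_less_eq(3))
  finally show ?thesis .
qed

lemma mval_capacity_cong:
  assumes C: "0 \<le> C" "0 \<le> C'" and s: "s < n" and M: "M \<le> min C C'"
  shows "mval C s M = mval C' s M"
proof -
  define m where "m = min C C'"
  have "s \<le> n - 1" using s by simp
  then have "\<forall>M\<le>m. mval C s M = mval C' s M"
  proof (induction s rule: inc_induct)
    case base
    show ?case using mval_last[of C] mval_last[of C'] by simp
  next
    case (step s)
    define k where "k = Suc s"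
    have sn: "Suc s < n" using step by simp
    have k: "1 \<le> k" "k < n" "k \<in> {1..n}" using sn by (auto simp: k_def)
    have IH: "\<forall>M\<le>m. mval C k M = mval C' k M" using step.IH by (simp add: k_def)
    have heq: "mval_next C s y = mval_next C' s y" if "y \<le> m" for y
      using resv_capacity_cong[OF C k(1,2) _ _ IH that] IH that
      by (auto simp: mval_next_def k_def m_def)
    show ?case
    proof (intro allI impI)
      fix M assume "M \<le> m"
      have "AE x in demand k. mval_next C s (M - x) = mval_next C' s (M - x)"
        using AE_demand_pos[OF k(3)] by eventually_elim (use \<open>M \<le> m\<close> heq in auto)
      then show "mval C s M = mval C' s M"
        unfolding mval_eq_integral[OF C(1) sn] mval_eq_integral[OF C(2) sn] k_def[symmetric]
        using mval_next_measurable[OF C(1) sn regular_stage] mval_next_measurable[OF C(2) sn regular_stage]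
          C sn by (intro integral_cong_AE) auto
    qed
  qed
  then show ?thesis using M by (simp add: m_def)
qed

section \<open>Total marginal revenue of capacity\<close>

lemma mval_next_props:
  assumes "0 \<le> C" "Suc s < n"
  shows "\<And>y y'. y \<le> y' \<Longrightarrow> y' \<le> C \<Longrightarrow> mval_next C s y' \<le> mval_next C s y"
    and "\<And>y. y \<le> 0 \<Longrightarrow> mval_next C s y = p (Suc s)"
    and "\<And>y. p n \<le> mval_next C s y \<and> mval_next C s y \<le> p_max"
    and "\<And>y. \<bar>mval_next C s y\<bar> \<le> \<bar>p n\<bar> + \<bar>p_max\<bar>"
    and "mval_next C s \<in> borel_measurable borel"
  using mval_next_facts[OF assms regular_stage[OF assms(1,2)]] by auto

lemma integrable_mval_next:
  assumes "0 \<le> C" "Suc s < n"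
  shows "integrable (demand (Suc s)) (\<lambda>x. mval_next C s (M - x))"
proof -
  interpret D: prob_space "demand (Suc s)" using prob_space_demand assms by simp
  show ?thesis
    by (rule D.integrable_const_bound[where B="\<bar>p n\<bar> + \<bar>p_max\<bar>"]) (use mval_next_props[OF assms] in auto)
qed

text \<open>With positive probability the demand of period 1 pushes the level below the reservation,
  where the marginal value is the price \<open>p 1\<close>, which exceeds the cheapest price \<open>p n\<close>.\<close>

lemma p_last_less_mval_first:
  assumes C: "0 \<le> C"
  shows "p n < mval C 0 M"
proof -
  have sn: "Suc 0 < n" and k1: "1 \<in> {1..n}" using n_ge_2 by auto
  interpret D: prob_space "demand 1" using prob_space_demand[OF k1] .
  have p1: "p n < p 1"
    using p_nxt_neq p_last_min n_ge_2 by (metis atLeastAtMost_iff le_less nxt_def one_le_numeral order_trans)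
  define l where "l = max 0 (M - resv C 1)"
  define I where "I = {l<..<l+1}"
  have hlow: "p n + (p 1 - p n) * indicator I x \<le> mval_next C 0 (M - x)" for x
  proof (cases "x \<in> I")
    case True
    then have "M - x \<le> resv C 1" by (auto simp: I_def l_def)
    then show ?thesis using True by (simp add: mval_next_def)
  qed (use mval_next_props(3)[OF C sn, of "M - x"] in simp)
  have "emeasure (demand 1) I \<noteq> 0"
    unfolding I_def by (rule emeasure_demand_interval_pos[OF k1]) (auto simp: l_def)
  then have mI: "0 < measure (demand 1) I"
    using D.emeasure_eq_measure[of I] by (simp add: measure_nonneg less_le)
  have fI: "emeasure (demand 1) I < \<infinity>" using D.emeasure_finite[of I] by (simp add: less_top)
  have intI: "integrable (demand 1) (\<lambda>x. (p 1 - p n) * indicator I x)"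
    using fI by (intro integrable_mult_right integrable_real_indicator) (auto simp: I_def)
  have "p n < p n + (p 1 - p n) * measure (demand 1) I" using p1 mI by simp
  also have "\<dots> = (\<integral>x. p n + (p 1 - p n) * indicator I x \<partial>demand 1)"
    using D.prob_space fI by (subst Bochner_Integration.integral_add[OF D.integrable_const intI]) (simp add: I_def)
  also have "\<dots> \<le> (\<integral>x. mval_next C 0 (M - x) \<partial>demand 1)"
    using integrable_mval_next[OF C sn] hlow
    by (intro integral_mono Bochner_Integration.integrable_add D.integrable_const intI) auto
  also have "\<dots> = mval C 0 M" using mval_eq_integral[OF C sn] by simp
  finally show ?thesis .
qed

lemma mval_next_level_of_mval_eq:
  assumes C: "0 \<le> C" and sn: "Suc s < n" and ac: "a < c" "c \<le> C"
    and eq: "mval C s a = mval C s c"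
  shows "\<forall>y<c. mval_next C s y = p (Suc s)"
proof -
  have kn: "Suc s \<in> {1..n}" using sn by auto
  interpret D: prob_space "demand (Suc s)" using prob_space_demand[OF kn] .
  show ?thesis
  proof (rule integral_translate_eq_imp_level[where K="\<bar>p n\<bar> + \<bar>p_max\<bar>"])
    show "finite_measure (demand (Suc s))" by unfold_locales
    show "(\<integral>x. mval_next C s (a - x) \<partial>demand (Suc s)) = (\<integral>x. mval_next C s (c - x) \<partial>demand (Suc s))"
      using eq mval_eq_integral[OF C sn] by simp
  qed (use mval_next_props[OF C sn] AE_demand_pos[OF kn] emeasure_demand_interval_pos[OF kn] ac in auto)
qed

lemma mval_eq_of_mval_next_level:
  assumes C: "0 \<le> C" and sn: "Suc s < n" and y: "y < c"
    and level: "\<forall>y<c. mval_next C s y = p (Suc s)"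
  shows "mval C s y = p (Suc s)"
proof -
  have kn: "Suc s \<in> {1..n}" using sn by auto
  interpret D: prob_space "demand (Suc s)" using prob_space_demand[OF kn] .
  have "AE x in demand (Suc s). mval_next C s (y - x) = p (Suc s)"
    using AE_demand_pos[OF kn] by eventually_elim (use level y in auto)
  then have "(\<integral>x. mval_next C s (y - x) \<partial>demand (Suc s)) = (\<integral>x. p (Suc s) \<partial>demand (Suc s))"
    using mval_next_props(5)[OF C sn] by (intro integral_cong_AE) auto
  then show ?thesis using mval_eq_integral[OF C sn, of y] D.prob_space by simp
qed

text \<open>If the marginal value after period \<open>s + 1\<close> is flat below the capacity, the reservation of
  period \<open>s + 1\<close> is the full capacity: otherwise the marginal value of period \<open>s + 1\<close> would be
  the price \<open>p (Suc s)\<close> above the reservation and, by the same flatness argument one period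
  later, also the different price \<open>p (s + 2)\<close>.\<close>

lemma resv_eq_capacity_of_level:
  assumes C: "0 < C" and sn: "Suc s < n"
    and level: "\<forall>y<C. mval_next C s y = p (Suc s)"
  shows "resv C (Suc s) = C"
proof (rule ccontr)
  define k where "k = Suc s"
  have kn: "1 \<le> k" "k < n" "k \<in> {1..n}" using sn by (auto simp: k_def)
  assume "resv C (Suc s) \<noteq> C"
  then have lt: "resv C k < C" using resv_bounds(2)[of C k] C kn by (simp add: k_def)
  define y1 where "y1 = resv C k + (C - resv C k) / 3"
  define y2 where "y2 = resv C k + 2 * (C - resv C k) / 3"
  have yy: "resv C k < y1" "y1 < y2" "y2 < C"
    using lt by (auto simp: y1_def y2_def field_simps)
  have gk: "mval C k y = p k" if "resv C k < y" "y < C" for y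
    using level that unfolding mval_next_def k_def by auto
  have "p k \<noteq> p (Suc k)" using p_nxt_neq[rule_format, OF kn(3)] nxt_eq_Suc[OF kn(2)] by simp
  moreover have "mval C k y1 = p (Suc k)"
  proof (cases "Suc k < n")
    case True
    have "\<forall>y<y2. mval_next C k y = p (Suc k)"
      using C yy gk[of y1] gk[of y2] by (intro mval_next_level_of_mval_eq[OF _ True yy(2)]) auto
    then show ?thesis using C yy by (intro mval_eq_of_mval_next_level[OF _ True yy(2)]) auto
  next
    case False
    then have "k = n - 1" "Suc k = n" using kn by auto
    then show ?thesis using mval_last by simp
  qed
  ultimately show False using gk[of y1] yy by simp
qed

lemma total_MR_terms_eq:
  assumes C1: "0 \<le> C1" and C12: "C1 < C2"
    and eq: "\<forall>i\<in>{1..n}. max 0 (mval C2 (start_idx n i) C1 - p i) = max 0 (mval C2 (start_idx n i) C2 - p i)"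
    and s: "s < n"
  shows "mval C2 s C1 = mval C2 s C2 \<and> (0 < s \<longrightarrow> p s < mval C2 s C2)"
  using s
proof (induction s)
  case 0
  have "n \<in> {1..n}" "start_idx n n = 0" using n_ge_2 by (auto simp: start_idx_def)
  then have "max 0 (mval C2 0 C1 - p n) = max 0 (mval C2 0 C2 - p n)" using eq by force
  moreover have "p n < mval C2 0 C2" using p_last_less_mval_first C1 C12 by simp
  moreover have "mval C2 0 C2 \<le> mval C2 0 C1" using mval_antitone[of C2 0 C1 C2] C1 C12 n_ge_2 by simp
  ultimately show ?case by (simp add: max_def split: if_splits)
next
  case (Suc s)
  define k where "k = Suc s"
  have sn: "Suc s < n" using Suc.prems .
  have kn: "1 \<le> k" "k < n" "k \<in> {1..n}" using sn by (auto simp: k_def)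
  have C2: "0 \<le> C2" "0 < C2" using C1 C12 by auto
  have "mval C2 s C1 = mval C2 s C2" using Suc.IH sn by simp
  then have "\<forall>y<C2. mval_next C2 s y = p k"
    unfolding k_def using mval_next_level_of_mval_eq[OF C2(1) sn C12 order.refl] by simp
  then have "resv C2 k = C2" unfolding k_def by (rule resv_eq_capacity_of_level[OF C2(2) sn])
  note no_solution = resv_eq_capacity[OF C2(1) kn(1,2) this C2(2)]
  have "p k < mval C2 k C1"
  proof (rule ccontr)
    assume "\<not> p k < mval C2 k C1"
    moreover have "mval C2 k 0 = p (Suc k)" using mval_nonpos[OF C2(1) kn(2), of 0] by simp
    ultimately obtain y where "0 \<le> y" "y \<le> C1" "mval C2 k y = p k"
      using IVT2'[of "mval C2 k" C1 "p k" 0] continuous_on_subset[OF continuous_mval[OF C2(1) kn(2)]]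
        C1 no_solution(1) by force
    then show False using no_solution(2) C12 by auto
  qed
  moreover have "max 0 (mval C2 k C1 - p k) = max 0 (mval C2 k C2 - p k)"
    using eq[rule_format, OF kn(3)] kn by (simp add: start_idx_def)
  ultimately show ?case unfolding k_def by (simp add: max_def split: if_splits)
qed

lemma mval_next_le_of_mval_diag_le:
  assumes C0: "0 \<le> C0" and sn: "Suc s < n"
    and diag: "\<And>C. C0 \<le> C \<Longrightarrow> mval C (Suc s) C \<le> q"
    and C: "C0 \<le> C" and y: "C0 < y" "y \<le> C"
  shows "mval_next C s y \<le> q"
proof -
  define k where "k = Suc s"
  have kn: "1 \<le> k" "k < n" using sn by (auto simp: k_def)
  have C': "0 \<le> C" using C C0 by simp
  have mval_le: "mval C k z \<le> q" if "C0 \<le> z" "z \<le> C" for z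
    using mval_capacity_cong[OF _ C' kn(2), of z z] diag[of z] that C0 by (simp add: k_def)
  show ?thesis
  proof (cases "y \<le> resv C k")
    case False
    then show ?thesis using mval_le[of y] y by (simp add: mval_next_def k_def)
  next
    case True
    have "p k \<le> q"
    proof (rule ccontr)
      assume pk: "\<not> p k \<le> q"
      have "resv C k \<le> C0"
      proof (cases "p (Suc k) \<le> p k")
        case True
        then show ?thesis using resv_eq_0[OF C' kn] C0 by simp
      next
        case False
        have "mval C k 0 = p (Suc k)" using mval_nonpos[OF C' kn(2), of 0] by simp
        then obtain y0 where "0 \<le> y0" "y0 \<le> C0" "mval C k y0 = p k"
          using IVT2'[of "mval C k" C0 "p k" 0] continuous_on_subset[OF continuous_mval[OF C' kn(2)]]
            C0 mval_le[of C0] C pk False by force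
        then show ?thesis using resv_le_solution[OF C' kn, of y0] by simp
      qed
      then show False using True y by simp
    qed
    then show ?thesis using True by (simp add: mval_next_def k_def)
  qed
qed

lemma mval_diag_le_Markov:
  assumes C0: "0 \<le> C0" and sn: "Suc s < n" and diag: "\<forall>C\<ge>C0. mval C (Suc s) C \<le> p n + e"
    and e: "0 \<le> e" and C: "C0 < C"
  shows "mval C s C \<le> p n + e + (p_max - p n) * (\<integral>x. \<bar>x\<bar> \<partial>demand (Suc s)) / (C - C0)"
proof -
  have kn: "Suc s \<in> {1..n}" using sn by auto
  have C': "0 \<le> C" using C0 C by simp
  have K: "0 \<le> p_max - p n" using p_le_p_max[of n] n_ge_2 by simp
  have "mval C s C = (\<integral>x. mval_next C s (C - x) \<partial>demand (Suc s))"
    using mval_eq_integral[OF C' sn] .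
  also have "\<dots> \<le> p n + e + (p_max - p n) * (\<integral>x. \<bar>x\<bar> \<partial>demand (Suc s)) / (C - C0)"
  proof (rule integral_translate_le_Markov[OF prob_space_demand[OF kn] _ integrable_demand_id[OF kn]
        AE_demand_pos[OF kn] mval_next_props(5,4)[OF C' sn] _ _ K C])
    show "mval_next C s y \<le> p n + e + (p_max - p n)" for y
      using mval_next_props(3)[OF C' sn, of y] e by simp
    show "mval_next C s y \<le> p n + e" if "C0 < y" "y \<le> C" for y
      using mval_next_le_of_mval_diag_le[OF C0 sn _ _ that] diag C by simp
  qed simp
  finally show ?thesis .
qed

lemma mval_diag_eventually_le:
  assumes s: "s < n" and e: "0 < \<epsilon>"
  shows "\<exists>C0\<ge>0. \<forall>C\<ge>C0. mval C s C \<le> p n + \<epsilon>"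
proof -
  have "s \<le> n - 1" using s by simp
  then show ?thesis
    using e
  proof (induction s arbitrary: \<epsilon> rule: inc_induct)
    case base
    show ?case using mval_last base.prems by (intro exI[of _ 0]) auto
  next
    case (step s)
    have sn: "Suc s < n" using step by simp
    define e' where "e' = \<epsilon> / 2"
    have e': "0 < e'" using step.prems by (simp add: e'_def)
    obtain C0 where C0: "0 \<le> C0" "\<forall>C\<ge>C0. mval C (Suc s) C \<le> p n + e'"
      using step.IH[OF e'] by auto
    define KE where "KE = (p_max - p n) * (\<integral>x. \<bar>x\<bar> \<partial>demand (Suc s))"
    have KE: "0 \<le> KE" using p_le_p_max[of n] n_ge_2 unfolding KE_def by simp
    show ?case
    proof (intro exI[of _ "C0 + 1 + KE / e'"] conjI allI impI)
      show "0 \<le> C0 + 1 + KE / e'" using C0 KE e' by simp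
      fix C assume C: "C0 + 1 + KE / e' \<le> C"
      moreover have "0 \<le> KE / e'" using KE e' by simp
      ultimately have "C0 < C" "KE / e' \<le> C - C0" by linarith+
      then have "KE / (C - C0) \<le> e'" using e' by (simp add: divide_le_eq mult.commute)
      moreover have "mval C s C \<le> p n + e' + KE / (C - C0)"
        using mval_diag_le_Markov[OF C0(1) sn C0(2) _ \<open>C0 < C\<close>] e' unfolding KE_def by simp
      ultimately show "mval C s C \<le> p n + \<epsilon>" unfolding e'_def by linarith
    qed
  qed
qed

definition total_MR :: "real \<Rightarrow> real" where
  "total_MR C = (\<Sum>i=1..n. max 0 (mval C (start_idx n i) C - p i))"

lemma sum_MR_eq_total_MR: "0 \<le> C \<Longrightarrow> (\<Sum>i=1..n. MR P X p n C i) = total_MR C"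
  unfolding total_MR_def by (intro sum.cong refl MR_eq) auto

lemma total_MR_0: "total_MR 0 = pi_max p n"
proof -
  have "mval 0 (start_idx n i) 0 = p (nxt n i)" if "i \<in> {1..n}" for i
    using mval_nonpos[OF order.refl start_idx_lt[OF that], of 0] p_Suc_start_idx[OF that] by simp
  then have "total_MR 0 = (\<Sum>i=1..n. max 0 (p (nxt n i) - p i))" unfolding total_MR_def by simp
  also have "\<dots> = pi_max p n" using sum_rises_eq_pi_max[OF n_ge_2 p_nxt_neq] .
  finally show ?thesis .
qed

lemma total_MR_eq_at_larger_capacity:
  assumes "0 \<le> C" "C \<le> C'"
  shows "total_MR C = (\<Sum>i=1..n. max 0 (mval C' (start_idx n i) C - p i))"
  unfolding total_MR_def
proof (intro sum.cong refl)
  fix i assume "i \<in> {1..n}"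
  then have "mval C (start_idx n i) C = mval C' (start_idx n i) C"
    using assms by (intro mval_capacity_cong start_idx_lt) auto
  then show "max 0 (mval C (start_idx n i) C - p i) = max 0 (mval C' (start_idx n i) C - p i)"
    by simp
qed

lemma continuous_on_total_MR: "0 \<le> B \<Longrightarrow> continuous_on {0..B} total_MR"
proof -
  assume B: "0 \<le> B"
  have "continuous_on {0..B} (\<lambda>C. \<Sum>i=1..n. max 0 (mval B (start_idx n i) C - p i))"
    by (intro continuous_intros continuous_on_subset[OF continuous_mval[OF B start_idx_lt]]) auto
  then show ?thesis
    by (rule continuous_on_cong[THEN iffD1, rotated 2]) (auto simp: total_MR_eq_at_larger_capacity)
qed

text \<open>If \<open>total_MR\<close> were constant on \<open>[C1, C2]\<close>, every marginal value along the cycle would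
  exceed the price of its period, up to \<open>p n < mval C2 (n - 1) C2 = p n\<close>.\<close>

lemma total_MR_strict_antimono:
  assumes C1: "0 \<le> C1" and C12: "C1 < C2"
  shows "total_MR C2 < total_MR C1"
proof (rule ccontr)
  assume "\<not> total_MR C2 < total_MR C1"
  define T where "T i C = max 0 (mval C2 (start_idx n i) C - p i)" for i C
  have C2: "0 \<le> C2" using C1 C12 by simp
  have le: "T i C2 \<le> T i C1" if "i \<in> {1..n}" for i
    unfolding T_def using mval_antitone[OF C2 start_idx_lt[OF that], of C1 C2] C12 by auto
  have "(\<Sum>i=1..n. T i C1) \<le> (\<Sum>i=1..n. T i C2)"
    using \<open>\<not> total_MR C2 < total_MR C1\<close> total_MR_eq_at_larger_capacity[OF C1 less_imp_le[OF C12]]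
    unfolding total_MR_def T_def by simp
  moreover have "(\<Sum>i=1..n. T i C2) \<le> (\<Sum>i=1..n. T i C1)"
    using le by (intro sum_mono) auto
  ultimately have "(\<Sum>i=1..n. T i C2) = (\<Sum>i=1..n. T i C1)" by simp
  then have "\<forall>i\<in>{1..n}. T i C1 = T i C2"
  proof (intro ballI)
    fix i assume "i \<in> {1..n}"
    with sum_mono_inv[OF \<open>(\<Sum>i=1..n. T i C2) = (\<Sum>i=1..n. T i C1)\<close> le]
    show "T i C1 = T i C2" by simp
  qed
  then have "p (n - 1) < mval C2 (n - 1) C2"
    using total_MR_terms_eq[OF C1 C12, of "n - 1"] n_ge_2 unfolding T_def by auto
  moreover have "p n \<le> p (n - 1)" using p_last_le n_ge_2 by simp
  ultimately show False using mval_last by simp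
qed

lemma total_MR_eventually_le:
  assumes e: "0 < e"
  shows "\<exists>B\<ge>0. total_MR B \<le> e"
proof -
  define \<epsilon> where "\<epsilon> = e / real n"
  have n0: "0 < real n" using n_ge_2 by simp
  have eps: "0 < \<epsilon>" using e n0 by (simp add: \<epsilon>_def)
  obtain F where F: "\<And>s. s < n \<Longrightarrow> 0 \<le> F s \<and> (\<forall>C\<ge>F s. mval C s C \<le> p n + \<epsilon>)"
    using mval_diag_eventually_le[OF _ eps] by metis
  define B where "B = Max (F ` {..<n})"
  have FB: "F s \<le> B" if "s < n" for s unfolding B_def using that by (intro Max_ge) auto
  have B0: "0 \<le> B" using FB[of 0] F[of 0] n_ge_2 by force
  have "total_MR B \<le> (\<Sum>i=1..n. \<epsilon>)"
    unfolding total_MR_def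
  proof (intro sum_mono)
    fix i assume i: "i \<in> {1..n}"
    have "mval B (start_idx n i) B \<le> p n + \<epsilon>"
      using F[OF start_idx_lt[OF i]] FB[OF start_idx_lt[OF i]] by auto
    then show "max 0 (mval B (start_idx n i) B - p i) \<le> \<epsilon>" using eps p_last_le[OF i] by simp
  qed
  also have "\<dots> = e" using n0 by (simp add: \<epsilon>_def)
  finally show ?thesis using B0 by blast
qed

lemma ex1_optimal_capacity_iff:
  assumes "0 < p_s"
  shows "(\<exists>!C. C \<ge> 0 \<and> p_s = (\<Sum>i=1..n. MR P X p n C i)) \<longleftrightarrow> p_s \<le> pi_max p n"
proof -
  have "(C \<ge> 0 \<and> p_s = (\<Sum>i=1..n. MR P X p n C i)) \<longleftrightarrow> (0 \<le> C \<and> p_s = total_MR C)" for C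
    using sum_MR_eq_total_MR[of C] by auto
  then show ?thesis
    unfolding total_MR_0[symmetric]
    using ex1_nonneg_solution_iff[OF continuous_on_total_MR total_MR_strict_antimono
          total_MR_eventually_le[OF assms]] by simp
qed

end

theorem corollary1:
  fixes P :: "'a measure" and X :: "nat \<Rightarrow> 'a \<Rightarrow> real" and f :: "nat \<Rightarrow> real \<Rightarrow> real"
    and p :: "nat \<Rightarrow> real" and n :: nat and p_s :: real
  assumes "prob_space P"
    and "n \<ge> 2"
    and "\<forall>k\<in>{1..n}. p n \<le> p k"
    and "\<forall>k\<in>{1..n}. p k \<noteq> p (nxt n k)"
    and "prob_space.indep_vars P (\<lambda>_. borel) X {1..n}"
    and "\<forall>k\<in>{1..n}. distributed P lborel (X k) (\<lambda>x. ennreal (f k x))"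
    and "\<forall>k\<in>{1..n}. \<forall>x. f k x \<ge> 0 \<and> (f k x > 0 \<longleftrightarrow> x \<ge> 0)"
    and "\<forall>k\<in>{1..n}. \<exists>f'. continuous_on {0..} f' \<and>
           (\<forall>x\<ge>0. (f k has_real_derivative f' x) (at x within {0..}))"
    and "\<forall>k\<in>{1..n}. integrable P (X k)"
    and "p_s > 0"
  shows "(\<exists>!C. C \<ge> 0 \<and> p_s = (\<Sum>i=1..n. MR P X p n C i)) \<longleftrightarrow> p_s \<le> pi_max p n"
proof -
  interpret tou_storage P X f p n
    by (intro tou_storage.intro tou_storage_axioms.intro) (use assms in auto)
  show ?thesis by (rule ex1_optimal_capacity_iff) fact
qed

end
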